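(* Let $r\ge1$ be an integer, let $\Gamma$ be a finite graph without loops (multiple edges allowed; edges oriented if $r$ is odd), and let $\alpha\in E(\Gamma)$. Then the sequence \[ R^r(\Gamma\setminus\alpha)\xrightarrow{\ i_\alpha^R\ }R^r(\Gamma)\xrightarrow{\ g_\alpha^R\ }R^r(\Gamma/\alpha)\otimes e_\alpha\to0 \] is exact.
   Context: A circuit $w$ of length $k$ in a graph is an ordered sequence of edges $w_1,\dots,w_k$ with vertices $v_1,\dots,v_k,v_{k+1}=v_1$ such that $v_i,v_{i+1}$ are the endpoints of $w_i$; for $r$ odd, $\epsilon_i(w)=1$ if $w_i$ is oriented from $v_i$ to $v_{i+1}$ and $-1$ otherwise. $\Lambda^r(\Gamma)$: for $r$ even, the free graded-commutative $\mathbb{Z}$-algebra on generators $e_\beta$ of degree $r-1$, one per edge; for $r$ odd, the commutative graded $\mathbb{Z}$-algebra on such generators modulo $e_\beta^2=0$. Arnold class: $A(w)=\sum_i(-1)^i w_1\cdots\widehat{w_i}\cdots w_k$ ($r$ even), $A(w)=\sum_i\epsilon_i(w) w_1\cdots\widehat{w_i}\cdots w_k$ ($r$ odd), where $w_i$ stands for $e_{w_i}$; $A(w)=1$ for a one-edge circuit (loop). $I^r(\Gamma)$ is the ideal generated by Arnold classes and $R^r(\Gamma)=\Lambda^r(\Gamma)/I^r(\Gamma)$. $\Gamma\setminus\alpha$ is $\Gamma$ with $\alpha$ deleted; $\Gamma/\alpha$ is obtained by deleting $\alpha$ and identifying its endpoints; $[\eta]$ denotes the image of $\eta\ne\alpha$.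 $i_\alpha^R$ is induced by $e_\beta\mapsto e_\beta$. $\Lambda^r[e_\alpha]=\mathbb{Z}\oplus\mathbb{Z}e_\alpha$ (exterior algebra, $\deg e_\alpha=r-1$). Let $\psi_\alpha^\Lambda:\Lambda^r(\Gamma)\to\Lambda^r(\Gamma/\alpha)\otimes\Lambda^r[e_\alpha]$ be the ring map with $e_\eta\mapsto e_{[\eta]}\otimes1$ ($\eta\neq\alpha$), $e_\alpha\mapsto1\otimes e_\alpha$; let $\pi$ be the projection of $\Lambda^r(\Gamma/\alpha)\otimes\Lambda^r[e_\alpha]=(\Lambda^r(\Gamma/\alpha)\otimes1)\oplus(\Lambda^r(\Gamma/\alpha)\otimes e_\alpha)$ onto the second summand, and $g_\alpha^\Lambda=\pi\circ\psi_\alpha^\Lambda$. Then $g_\alpha^\Lambda(I^r(\Gamma))\subseteq I^r(\Gamma/\alpha)\otimes e_\alpha$, and $g_\alpha^R:R^r(\Gamma)\to R^r(\Gamma/\alpha)\otimes e_\alpha:=(\Lambda^r(\Gamma/\alpha)\otimes e_\alpha)/(I^r(\Gamma/\alpha)\otimes e_\alpha)$ is the induced map. *)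

theory Defs
  imports Main
begin

(* Concrete model of the algebra Lambda^r(Gamma) over Z.
   An element is a function from finite sets of edges (monomials) to integer
   coefficients: x S is the coefficient of e_S = e_{s_1} ... e_{s_k}, the
   product of the generators of S in increasing order of the (arbitrary)
   linear order on the edge type. *)

type_synonym 'e lam = "'e set \<Rightarrow> int"

definition in_lam :: "'e set \<Rightarrow> 'e lam \<Rightarrow> bool" where
  "in_lam E x \<longleftrightarrow> (\<forall>S. x S \<noteq> 0 \<longrightarrow> S \<subseteq> E)"

definition lzero :: "'e lam" where "lzero = (\<lambda>S. 0)"
definition lone :: "'e lam" where "lone = (\<lambda>S. if S = {} then 1 else 0)"
definition gen :: "'e \<Rightarrow> 'e lam" where "gen e = (\<lambda>S. if S = {e} then 1 else 0)"
definition ladd :: "'e lam \<Rightarrow> 'e lam \<Rightarrow> 'e lam" where "ladd x y = (\<lambda>S. x S + y S)"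
definition lsub :: "'e lam \<Rightarrow> 'e lam \<Rightarrow> 'e lam" where "lsub x y = (\<lambda>S. x S - y S)"
definition lscale :: "int \<Rightarrow> 'e lam \<Rightarrow> 'e lam" where "lscale c x = (\<lambda>S. c * x S)"

definition inv_count :: "('e::linorder) set \<Rightarrow> 'e set \<Rightarrow> nat" where
  "inv_count S T = card {(s, t). s \<in> S \<and> t \<in> T \<and> t < s}"

(* multiplication: generators of degree r-1; graded commutative with e^2 = 0.
   e_S * e_T = 0 if S, T intersect, else (-1)^((r-1)*inv(S,T)) e_{S \<union> T}. *)
definition lmult :: "nat \<Rightarrow> ('e::linorder) lam \<Rightarrow> 'e lam \<Rightarrow> 'e lam" where
  "lmult r x y = (\<lambda>U. \<Sum>S\<in>Pow U. x S * y (U - S) * (-1) ^ ((r - 1) * inv_count S (U - S)))"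

definition listprod :: "nat \<Rightarrow> ('e::linorder) list \<Rightarrow> 'e lam" where
  "listprod r ws = foldr (\<lambda>e acc. lmult r (gen e) acc) ws lone"

(* Graphs: finite edge set E, each edge e has endpoints src e, tgt e
   (orientation from src to tgt). *)

definition circuit :: "'e set \<Rightarrow> ('e \<Rightarrow> 'v) \<Rightarrow> ('e \<Rightarrow> 'v) \<Rightarrow> 'e list \<Rightarrow> 'v list \<Rightarrow> bool" where
  "circuit E src tgt ws vs \<longleftrightarrow> length ws \<ge> 1 \<and> length vs = length ws \<and> set ws \<subseteq> E \<and>
     (\<forall>i < length ws. {src (ws ! i), tgt (ws ! i)} = {vs ! i, vs ! ((i + 1) mod length ws)})"

definition eps :: "('e \<Rightarrow> 'v) \<Rightarrow> ('e \<Rightarrow> 'v) \<Rightarrow> 'e list \<Rightarrow> 'v list \<Rightarrow> nat \<Rightarrow> int" where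
  "eps src tgt ws vs i =
     (if src (ws ! i) = vs ! i \<and> tgt (ws ! i) = vs ! ((i + 1) mod length ws) then 1 else -1)"

definition remove_nth :: "nat \<Rightarrow> 'a list \<Rightarrow> 'a list" where
  "remove_nth i xs = take i xs @ drop (Suc i) xs"

(* Arnold class; indices are 0-based here, so (-1)^i of the paper becomes (-1)^(i+1) *)
definition arnold :: "nat \<Rightarrow> ('e \<Rightarrow> 'v) \<Rightarrow> ('e \<Rightarrow> 'v) \<Rightarrow> ('e::linorder) list \<Rightarrow> 'v list \<Rightarrow> 'e lam" where
  "arnold r src tgt ws vs =
     (if length ws = 1 then lone
      else (\<lambda>U. \<Sum>i<length ws.
              (if even r then (-1) ^ (i + 1) else eps src tgt ws vs i)
              * listprod r (remove_nth i ws) U))"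

inductive_set arnold_ideal :: "nat \<Rightarrow> ('e::linorder) set \<Rightarrow> ('e \<Rightarrow> 'v) \<Rightarrow> ('e \<Rightarrow> 'v) \<Rightarrow> 'e lam set"
  for r E src tgt where
  gen: "circuit E src tgt ws vs \<Longrightarrow> arnold r src tgt ws vs \<in> arnold_ideal r E src tgt"
| zero: "lzero \<in> arnold_ideal r E src tgt"
| add: "x \<in> arnold_ideal r E src tgt \<Longrightarrow> y \<in> arnold_ideal r E src tgt \<Longrightarrow> ladd x y \<in> arnold_ideal r E src tgt"
| lmul: "x \<in> arnold_ideal r E src tgt \<Longrightarrow> in_lam E y \<Longrightarrow> lmult r y x \<in> arnold_ideal r E src tgt"
| rmul: "x \<in> arnold_ideal r E src tgt \<Longrightarrow> in_lam E y \<Longrightarrow> lmult r x y \<in> arnold_ideal r E src tgt"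

(* Contraction Gamma/alpha: delete alpha, identify tgt alpha with src alpha.
   Edges of Gamma/alpha keep their names ([eta] = eta). *)
definition contr_vert :: "('e \<Rightarrow> 'v) \<Rightarrow> ('e \<Rightarrow> 'v) \<Rightarrow> 'e \<Rightarrow> 'v \<Rightarrow> 'v" where
  "contr_vert src tgt \<alpha> v = (if v = tgt \<alpha> then src \<alpha> else v)"

(* Lambda^r(Gamma/alpha) (x) Lambda^r[e_alpha]: pair (x0, x1) stands for
   x0 (x) 1 + x1 (x) e_alpha; graded (Koszul-sign) tensor product of algebras. *)
definition gradinv :: "nat \<Rightarrow> 'e lam \<Rightarrow> 'e lam" where
  "gradinv r b = (\<lambda>S. (-1) ^ ((r - 1) * card S) * b S)"

definition tmult :: "nat \<Rightarrow> ('e::linorder) lam \<times> 'e lam \<Rightarrow> 'e lam \<times> 'e lam \<Rightarrow> 'e lam \<times> 'e lam" where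
  "tmult r a b = (lmult r (fst a) (fst b),
                  ladd (lmult r (fst a) (snd b)) (lmult r (snd a) (gradinv r (fst b))))"

definition psi_gen :: "'e \<Rightarrow> 'e \<Rightarrow> 'e lam \<times> 'e lam" where
  "psi_gen \<alpha> e = (if e = \<alpha> then (lzero, lone) else (gen e, lzero))"

definition tlistprod :: "nat \<Rightarrow> 'e \<Rightarrow> ('e::linorder) list \<Rightarrow> 'e lam \<times> 'e lam" where
  "tlistprod r \<alpha> ws = foldr (\<lambda>e acc. tmult r (psi_gen \<alpha> e) acc) ws (lone, lzero)"

(* g_alpha = pi o psi_alpha, with Lambda(Gamma/alpha) (x) e_alpha identified with
   Lambda(Gamma/alpha) via x (x) e_alpha <-> x.  psi is the ring map extending
   psi_gen, evaluated on the basis monomials e_S (ordered products). *)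
definition g_map :: "nat \<Rightarrow> ('e::linorder) set \<Rightarrow> 'e \<Rightarrow> 'e lam \<Rightarrow> 'e lam" where
  "g_map r E \<alpha> x = (\<lambda>U. \<Sum>S\<in>Pow E. x S * snd (tlistprod r \<alpha> (sorted_list_of_set S)) U)"

end

theory Submission
  imports Defs
begin

(*
  Write x in Lambda(Gamma) as x = x0 + x1 e_alpha with x0, x1 free of e_alpha (free_part and cofactor
  below); g_alpha is x |-> x1. The cofactor obeys a graded Leibniz rule, g(y e_alpha) = y, and g kills
  Lambda(Gamma - alpha), so exactness reduces to two statements about ideals:
  (1) if x is in I(Gamma), then x0 and x1 are in I(Gamma/alpha);
  (2) every element of I(Gamma/alpha) is the cofactor x1 of some x in I(Gamma).
  By the Leibniz rule it suffices to check both on Arnold classes of closed walks, and even of closed walks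
  with distinct vertices: a closed walk revisiting a vertex splits into two shorter ones, and its Arnold
  class lies in the ideal generated by theirs. A simple closed walk of Gamma either avoids alpha (it
  survives in Gamma/alpha), passes alpha once (x1 is, up to sign, the Arnold class of the contracted walk,
  and x0 a multiple of the product of its edges), or runs along alpha and back (its class is 0).
  Conversely, lifting the edges of a simple closed walk of Gamma/alpha to Gamma, consecutive lifts can fail
  to meet only at the merged vertex, visited once, and inserting alpha there gives a closed walk of Gamma.
  If Gamma/alpha has a loop, both ideals contain 1 and there is nothing to prove.
*)

section \<open>Signs and inversion counts\<close>

(* The sign of n transpositions of generators of degree r - 1. *)
definition ksign :: "nat \<Rightarrow> nat \<Rightarrow> int" where
  "ksign r n = (-1) ^ ((r - 1) * n)"

lemma ksign_0 [simp]: "ksign r 0 = 1"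
  by (simp add: ksign_def)

lemma ksign_add: "ksign r (a + b) = ksign r a * ksign r b"
  by (simp add: ksign_def distrib_left power_add)

lemma ksign_mult_self [simp]: "ksign r a * ksign r a = 1"
  by (simp add: ksign_def flip: power_add)

lemma ksign_double [simp]: "ksign r (n + n) = 1"
  by (simp add: ksign_add)

lemma ksign_odd: "odd r \<Longrightarrow> ksign r n = 1"
  by (simp add: ksign_def)

lemma ksign_even: "even r \<Longrightarrow> r \<ge> 1 \<Longrightarrow> ksign r n = (-1) ^ n"
  by (simp add: ksign_def power_mult)

lemma finite_inversions: "finite S \<Longrightarrow> finite T \<Longrightarrow> finite {(s, t). s \<in> S \<and> t \<in> T \<and> t < s}"
  by (rule finite_subset[of _ "S \<times> T"]) auto

lemma inv_count_empty [simp]: "inv_count {} T = 0" "inv_count S {} = 0"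
  by (simp_all add: inv_count_def)

lemma inv_count_Un_left:
  assumes "finite A" "finite B" "finite C" "A \<inter> B = {}"
  shows "inv_count (A \<union> B) C = inv_count A C + inv_count B C"
proof -
  have "{(s, t). s \<in> A \<union> B \<and> t \<in> C \<and> t < s} =
        {(s, t). s \<in> A \<and> t \<in> C \<and> t < s} \<union> {(s, t). s \<in> B \<and> t \<in> C \<and> t < s}" by auto
  then show ?thesis
    unfolding inv_count_def using assms by (auto simp: finite_inversions intro: card_Un_disjoint)
qed

lemma inv_count_Un_right:
  assumes "finite A" "finite B" "finite C" "B \<inter> C = {}"
  shows "inv_count A (B \<union> C) = inv_count A B + inv_count A C"
proof -
  have "{(s, t). s \<in> A \<and> t \<in> B \<union> C \<and> t < s} =
        {(s, t). s \<in> A \<and> t \<in> B \<and> t < s} \<union> {(s, t). s \<in> A \<and> t \<in> C \<and> t < s}" by auto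
  then show ?thesis
    unfolding inv_count_def using assms by (auto simp: finite_inversions intro: card_Un_disjoint)
qed

lemma inv_count_swap:
  assumes "finite A" "finite B" "A \<inter> B = {}"
  shows "inv_count A B + inv_count B A = card A * card B"
proof -
  let ?down = "{(s, t). s \<in> A \<and> t \<in> B \<and> t < s}" and ?up = "{(s, t). s \<in> A \<and> t \<in> B \<and> s < t}"
  have fin_up: "finite ?up"
    by (rule finite_subset[of _ "A \<times> B"]) (auto simp: assms)
  have "?down \<union> ?up = A \<times> B"
    using assms by (auto simp: disjoint_iff) (metis linorder_neqE)
  moreover have "?up = prod.swap ` {(s, t). s \<in> B \<and> t \<in> A \<and> t < s}"
    by (auto simp: image_iff)
  moreover have "card (?down \<union> ?up) = card ?down + card ?up"
    by (rule card_Un_disjoint) (auto simp: finite_inversions assms fin_up)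
  ultimately show ?thesis
    unfolding inv_count_def by (simp add: card_image card_cartesian_product)
qed

lemma inv_count_singleton_right: "inv_count S {a} = card {s \<in> S. a < s}"
proof -
  have "{(s, t). s \<in> S \<and> t \<in> {a} \<and> t < s} = (\<lambda>s. (s, a)) ` {s \<in> S. a < s}" by auto
  then show ?thesis unfolding inv_count_def by (simp add: card_image inj_on_def)
qed

lemma inv_count_singleton_left: "inv_count {a} T = card {t \<in> T. t < a}"
proof -
  have "{(s, t). s \<in> {a} \<and> t \<in> T \<and> t < s} = (\<lambda>t. (a, t)) ` {t \<in> T. t < a}" by auto
  then show ?thesis unfolding inv_count_def by (simp add: card_image inj_on_def)
qed

section \<open>The algebra \<open>\<Lambda>\<close>\<close>

lemma ladd_lzero [simp]: "ladd x lzero = x" "ladd lzero x = x"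
  by (simp_all add: ladd_def lzero_def)

lemma lscale_lzero [simp]: "lscale c lzero = lzero"
  by (simp add: lscale_def lzero_def)

lemma lscale_lscale [simp]: "lscale c (lscale d x) = lscale (c * d) x"
  by (simp add: lscale_def mult.assoc)

lemma lscale_1 [simp]: "lscale 1 x = x"
  by (simp add: lscale_def)

lemma lsub_self [simp]: "lsub x x = lzero"
  by (simp add: lsub_def lzero_def)

definition finite_supp :: "'e lam \<Rightarrow> bool" where
  "finite_supp x \<longleftrightarrow> (\<forall>S. x S \<noteq> 0 \<longrightarrow> finite S)"

lemma in_lam_finite_supp: "finite E \<Longrightarrow> in_lam E x \<Longrightarrow> finite_supp x"
  unfolding in_lam_def finite_supp_def using finite_subset by blast

lemma finite_supp_infinite: "finite_supp x \<Longrightarrow> infinite S \<Longrightarrow> x S = 0"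
  unfolding finite_supp_def by blast

lemma finite_supp_simps [simp]:
  "finite_supp (gen e)" "finite_supp lone" "finite_supp lzero"
  by (simp_all add: finite_supp_def gen_def lone_def lzero_def)

lemma finite_supp_ladd [simp]: "finite_supp x \<Longrightarrow> finite_supp y \<Longrightarrow> finite_supp (ladd x y)"
  unfolding finite_supp_def ladd_def by (metis add.left_neutral)

lemma finite_supp_lscale [simp]: "finite_supp x \<Longrightarrow> finite_supp (lscale c x)"
  by (auto simp: finite_supp_def lscale_def)

lemma lmult_ksign: "lmult r x y U = (\<Sum>S\<in>Pow U. x S * y (U - S) * ksign r (inv_count S (U - S)))"
  by (simp add: lmult_def ksign_def)

lemma lmult_infinite: "infinite U \<Longrightarrow> lmult r x y U = 0"
  by (simp add: lmult_def)

lemma finite_supp_lmult [simp]: "finite_supp (lmult r x y)"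
  unfolding finite_supp_def using lmult_infinite by blast

lemma lmult_ladd_left: "lmult r (ladd a b) c = ladd (lmult r a c) (lmult r b c)"
  by (rule ext) (simp add: lmult_def ladd_def algebra_simps sum.distrib)

lemma lmult_ladd_right: "lmult r c (ladd a b) = ladd (lmult r c a) (lmult r c b)"
  by (rule ext) (simp add: lmult_def ladd_def algebra_simps sum.distrib)

lemma lmult_lscale_left: "lmult r (lscale k a) c = lscale k (lmult r a c)"
  by (rule ext) (simp add: lmult_def lscale_def algebra_simps sum_distrib_left)

lemma lmult_lscale_right: "lmult r c (lscale k a) = lscale k (lmult r c a)"
  by (rule ext) (simp add: lmult_def lscale_def algebra_simps sum_distrib_left)

lemma lmult_lzero [simp]: "lmult r lzero a = lzero" "lmult r a lzero = lzero"
  by (rule ext, simp add: lmult_def lzero_def)+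

lemma lmult_lone_left: "finite_supp x \<Longrightarrow> lmult r lone x = x"
proof (rule ext)
  fix U assume x: "finite_supp x"
  show "lmult r lone x U = x U"
  proof (cases "finite U")
    case True
    have "lmult r lone x U = (\<Sum>S\<in>Pow U. if S = {} then x (U - S) * ksign r (inv_count S (U - S)) else 0)"
      unfolding lmult_ksign lone_def by (rule sum.cong) auto
    also have "\<dots> = x U" using True by (simp add: sum.delta)
    finally show ?thesis .
  qed (use x in \<open>simp add: lmult_infinite finite_supp_infinite\<close>)
qed

lemma lmult_lone_right: "finite_supp x \<Longrightarrow> lmult r x lone = x"
proof (rule ext)
  fix U assume x: "finite_supp x"
  show "lmult r x lone U = x U"
  proof (cases "finite U")
    case True
    have "lmult r x lone U = (\<Sum>S\<in>Pow U. if S = U then x S * ksign r (inv_count S (U - S)) else 0)"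
      unfolding lmult_ksign lone_def by (rule sum.cong) auto
    also have "\<dots> = x U" using True by (simp add: sum.delta)
    finally show ?thesis .
  qed (use x in \<open>simp add: lmult_infinite finite_supp_infinite\<close>)
qed

lemma sum_Pow_Pow:
  assumes "finite U"
  shows "(\<Sum>T\<in>Pow U. \<Sum>S\<in>Pow T. f S T) = (\<Sum>S\<in>Pow U. \<Sum>B\<in>Pow (U - S). f S (S \<union> B))"
proof -
  have "(\<Sum>T\<in>Pow U. \<Sum>S\<in>Pow T. f S T) = (\<Sum>T\<in>Pow U. \<Sum>S\<in>{S \<in> Pow U. S \<subseteq> T}. f S T)"
    by (rule sum.cong) (auto intro!: sum.cong)
  also have "\<dots> = (\<Sum>S\<in>Pow U. \<Sum>T\<in>{T \<in> Pow U. S \<subseteq> T}. f S T)"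
    by (rule sum.swap_restrict) (auto simp: assms)
  also have "\<dots> = (\<Sum>S\<in>Pow U. \<Sum>B\<in>Pow (U - S). f S (S \<union> B))"
  proof (rule sum.cong[OF refl])
    fix S assume "S \<in> Pow U"
    then have "bij_betw (\<lambda>B. S \<union> B) (Pow (U - S)) {T \<in> Pow U. S \<subseteq> T}"
      by (intro bij_betw_byWitness[where f' = "\<lambda>T. T - S"]) auto
    then show "(\<Sum>T\<in>{T \<in> Pow U. S \<subseteq> T}. f S T) = (\<Sum>B\<in>Pow (U - S). f S (S \<union> B))"
      by (rule sum.reindex_bij_betw[symmetric])
  qed
  finally show ?thesis .
qed

lemma lmult_assoc: "lmult r (lmult r x y) z = lmult r x (lmult r y z)"
proof (rule ext)
  fix U
  show "lmult r (lmult r x y) z U = lmult r x (lmult r y z) U"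
  proof (cases "finite U")
    case fU: True
    define F where "F S B = x S * y B * z (U - S - B) *
      ksign r (inv_count S B + inv_count S (U - S - B) + inv_count B (U - S - B))" for S B
    have "lmult r (lmult r x y) z U = (\<Sum>T\<in>Pow U. \<Sum>S\<in>Pow T.
        x S * y (T - S) * ksign r (inv_count S (T - S)) * z (U - T) * ksign r (inv_count T (U - T)))"
      by (simp add: lmult_ksign sum_distrib_right)
    also have "\<dots> = (\<Sum>S\<in>Pow U. \<Sum>B\<in>Pow (U - S). F S B)"
      unfolding sum_Pow_Pow[OF fU]
    proof (intro sum.cong refl)
      fix S B assume S: "S \<in> Pow U" and B: "B \<in> Pow (U - S)"
      have "finite S" "finite B" "finite (U - S - B)" using S B fU by (auto intro: finite_subset)
      then have "inv_count (S \<union> B) (U - S - B) = inv_count S (U - S - B) + inv_count B (U - S - B)"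
        using B by (intro inv_count_Un_left) auto
      moreover have "S \<union> B - S = B" "U - (S \<union> B) = U - S - B" using B by auto
      ultimately show "x S * y (S \<union> B - S) * ksign r (inv_count S (S \<union> B - S)) * z (U - (S \<union> B)) *
          ksign r (inv_count (S \<union> B) (U - (S \<union> B))) = F S B"
        unfolding F_def by (simp add: ksign_add algebra_simps)
    qed
    also have "\<dots> = lmult r x (lmult r y z) U"
      unfolding lmult_ksign[of r x] lmult_ksign[of r y] sum_distrib_left sum_distrib_right
    proof (intro sum.cong refl)
      fix S B assume S: "S \<in> Pow U" and B: "B \<in> Pow (U - S)"
      have "finite S" "finite B" "finite (U - S - B)" using S B fU by (auto intro: finite_subset)
      moreover have "U - S = B \<union> (U - S - B)" using B by auto
      ultimately have "inv_count S (U - S) = inv_count S B + inv_count S (U - S - B)"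
        by (metis Diff_disjoint inv_count_Un_right)
      then show "F S B = x S * (y B * z (U - S - B) * ksign r (inv_count B (U - S - B))) *
          ksign r (inv_count S (U - S))"
        unfolding F_def by (simp add: ksign_add algebra_simps)
    qed
    finally show ?thesis .
  qed (simp add: lmult_infinite)
qed

definition lmonom :: "'e set \<Rightarrow> 'e lam" where
  "lmonom A = (\<lambda>U. if U = A then 1 else 0)"

lemma gen_eq_lmonom: "gen e = lmonom {e}"
  by (simp add: gen_def lmonom_def)

lemma lone_eq_lmonom: "lone = lmonom {}"
  by (simp add: lone_def lmonom_def)

lemma lmult_lmonom:
  assumes "finite A" "finite B"
  shows "lmult r (lmonom A) (lmonom B) =
    (if A \<inter> B = {} then lscale (ksign r (inv_count A B)) (lmonom (A \<union> B)) else lzero)"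
proof (rule ext)
  fix U
  show "lmult r (lmonom A) (lmonom B) U =
    (if A \<inter> B = {} then lscale (ksign r (inv_count A B)) (lmonom (A \<union> B)) else lzero) U"
  proof (cases "finite U")
    case True
    have "lmult r (lmonom A) (lmonom B) U =
        (\<Sum>S\<in>Pow U. if S = A then (if U - A = B then ksign r (inv_count A (U - A)) else 0) else 0)"
      unfolding lmult_ksign by (rule sum.cong) (auto simp: lmonom_def)
    also have "\<dots> = (if A \<subseteq> U \<and> U - A = B then ksign r (inv_count A B) else 0)"
      using True by (simp add: sum.delta)
    finally show ?thesis by (auto simp: lscale_def lmonom_def lzero_def)
  next
    case False
    then have "U \<noteq> A \<union> B" using assms by auto
    then show ?thesis using False by (simp add: lmult_infinite lmonom_def lscale_def lzero_def)
  qed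
qed

lemma lmult_gen_gen: "lmult r (gen e) (gen e) = lzero"
  by (simp add: gen_eq_lmonom lmult_lmonom)

definition homog :: "nat \<Rightarrow> 'e lam \<Rightarrow> bool" where
  "homog n x \<longleftrightarrow> (\<forall>S. x S \<noteq> 0 \<longrightarrow> card S = n)"

lemma homog_simps [simp]: "homog n lzero" "homog 0 lone" "homog 1 (gen e)"
  by (simp_all add: homog_def lzero_def lone_def gen_def)

lemma card_Diff_Pow: "finite U \<Longrightarrow> S \<in> Pow U \<Longrightarrow> card U = card S + card (U - S)"
  by (metis PowD card_Diff_subset finite_subset le_add_diff_inverse card_mono)

lemma homog_lmult: "homog m x \<Longrightarrow> homog n y \<Longrightarrow> homog (m + n) (lmult r x y)"
proof (unfold homog_def, intro allI impI)
  fix U assume x: "\<forall>S. x S \<noteq> 0 \<longrightarrow> card S = m" and y: "\<forall>S. y S \<noteq> 0 \<longrightarrow> card S = n"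
    and nz: "lmult r x y U \<noteq> 0"
  then have "finite U" using lmult_infinite by blast
  from nz obtain S where "S \<in> Pow U" "x S * y (U - S) * ksign r (inv_count S (U - S)) \<noteq> 0"
    unfolding lmult_ksign by (meson sum.not_neutral_contains_not_neutral)
  with x y \<open>finite U\<close> show "card U = m + n" by (auto simp: card_Diff_Pow)
qed

lemma lmult_commute_sum:
  "lmult r x y U = (\<Sum>T\<in>Pow U. y T * x (U - T) * ksign r (inv_count T (U - T)) * ksign r (card T * card (U - T)))"
proof (cases "finite U")
  case True
  have "bij_betw (\<lambda>T. U - T) (Pow U) (Pow U)"
    by (rule bij_betw_byWitness[where f' = "\<lambda>T. U - T"]) auto
  then have "lmult r x y U = (\<Sum>T\<in>Pow U. x (U - T) * y (U - (U - T)) * ksign r (inv_count (U - T) (U - (U - T))))"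
    unfolding lmult_ksign by (rule sum.reindex_bij_betw[symmetric])
  also have "\<dots> = (\<Sum>T\<in>Pow U. y T * x (U - T) * ksign r (inv_count T (U - T)) * ksign r (card T * card (U - T)))"
  proof (rule sum.cong[OF refl])
    fix T assume T: "T \<in> Pow U"
    then have "U - (U - T) = T" "finite T" "finite (U - T)" using True by (auto intro: finite_subset)
    moreover from this have "inv_count (U - T) T + inv_count T (U - T) = card T * card (U - T)"
      using inv_count_swap[of "U - T" T] by (simp add: Int_commute mult.commute)
    then have "ksign r (inv_count (U - T) T) = ksign r (inv_count T (U - T)) * ksign r (card T * card (U - T))"
      by (metis ksign_add ksign_mult_self mult.assoc mult.commute mult.right_neutral)
    ultimately show "x (U - T) * y (U - (U - T)) * ksign r (inv_count (U - T) (U - (U - T))) =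
        y T * x (U - T) * ksign r (inv_count T (U - T)) * ksign r (card T * card (U - T))"
      by simp
  qed
  finally show ?thesis .
qed (simp add: lmult_infinite)

lemma lmult_commute_homog:
  assumes "homog m x" "homog n y"
  shows "lmult r x y = lscale (ksign r (m * n)) (lmult r y x)"
proof (rule ext)
  fix U
  have "lmult r x y U = (\<Sum>T\<in>Pow U. ksign r (m * n) * (y T * x (U - T) * ksign r (inv_count T (U - T))))"
    unfolding lmult_commute_sum
    by (rule sum.cong[OF refl]) (use assms in \<open>auto simp: homog_def mult.commute\<close>)
  then show "lmult r x y U = lscale (ksign r (m * n)) (lmult r y x) U"
    by (simp add: lscale_def lmult_ksign sum_distrib_left)
qed

lemma gradinv_ksign: "gradinv r x = (\<lambda>S. ksign r (card S) * x S)"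
  by (simp add: gradinv_def ksign_def)

lemma gradinv_lmult: "gradinv r (lmult r x y) = lmult r (gradinv r x) (gradinv r y)"
proof (rule ext)
  fix U
  show "gradinv r (lmult r x y) U = lmult r (gradinv r x) (gradinv r y) U"
  proof (cases "finite U")
    case True
    then show ?thesis
      unfolding gradinv_ksign lmult_ksign sum_distrib_left
      by (intro sum.cong refl) (simp add: card_Diff_Pow ksign_add algebra_simps)
  qed (simp add: gradinv_def lmult_infinite)
qed

lemma gradinv_gradinv [simp]: "gradinv r (gradinv r x) = x"
  by (rule ext) (simp add: gradinv_ksign mult.assoc[symmetric])

lemma gradinv_homog: "homog n x \<Longrightarrow> gradinv r x = lscale (ksign r n) x"
  by (rule ext) (auto simp: gradinv_ksign lscale_def homog_def)

lemma gradinv_ladd: "gradinv r (ladd x y) = ladd (gradinv r x) (gradinv r y)"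
  by (rule ext) (simp add: gradinv_ksign ladd_def algebra_simps)

lemma gradinv_lscale: "gradinv r (lscale c x) = lscale c (gradinv r x)"
  by (rule ext) (simp add: gradinv_ksign lscale_def algebra_simps)

lemma finite_supp_gradinv [simp]: "finite_supp x \<Longrightarrow> finite_supp (gradinv r x)"
  by (auto simp: finite_supp_def gradinv_ksign)

lemma gradinv_simps [simp]: "gradinv r lzero = lzero" "gradinv r lone = lone"
  by (rule ext, simp add: gradinv_ksign lzero_def lone_def)+

lemma in_lam_simps [simp]: "in_lam E lzero" "in_lam E lone"
  by (simp_all add: in_lam_def lzero_def lone_def)

lemma in_lam_gen: "e \<in> E \<Longrightarrow> in_lam E (gen e)"
  by (simp add: in_lam_def gen_def)

lemma in_lam_ladd [simp]: "in_lam E x \<Longrightarrow> in_lam E y \<Longrightarrow> in_lam E (ladd x y)"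
  unfolding in_lam_def ladd_def by (metis add.left_neutral)

lemma in_lam_lsub [simp]: "in_lam E x \<Longrightarrow> in_lam E y \<Longrightarrow> in_lam E (lsub x y)"
  unfolding in_lam_def lsub_def by (metis diff_self)

lemma in_lam_lscale [simp]: "in_lam E x \<Longrightarrow> in_lam E (lscale c x)"
  by (auto simp: in_lam_def lscale_def)

lemma in_lam_gradinv [simp]: "in_lam E x \<Longrightarrow> in_lam E (gradinv r x)"
  by (auto simp: in_lam_def gradinv_ksign)

lemma in_lam_mono: "in_lam E x \<Longrightarrow> E \<subseteq> F \<Longrightarrow> in_lam F x"
  by (auto simp: in_lam_def)

lemma in_lam_lmult [simp]: "in_lam E x \<Longrightarrow> in_lam E y \<Longrightarrow> in_lam E (lmult r x y)"
proof (unfold in_lam_def, intro allI impI)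
  fix U assume x: "\<forall>S. x S \<noteq> 0 \<longrightarrow> S \<subseteq> E" and y: "\<forall>S. y S \<noteq> 0 \<longrightarrow> S \<subseteq> E"
    and "lmult r x y U \<noteq> 0"
  then obtain S where "S \<in> Pow U" "x S * y (U - S) * ksign r (inv_count S (U - S)) \<noteq> 0"
    unfolding lmult_ksign by (meson sum.not_neutral_contains_not_neutral)
  with x y show "U \<subseteq> E" by auto
qed

lemma listprod_Nil [simp]: "listprod r [] = lone"
  by (simp add: listprod_def)

lemma listprod_Cons [simp]: "listprod r (e # ws) = lmult r (gen e) (listprod r ws)"
  by (simp add: listprod_def)

lemma finite_supp_listprod [simp]: "finite_supp (listprod r ws)"
  by (cases ws) auto

lemma listprod_append: "listprod r (as @ bs) = lmult r (listprod r as) (listprod r bs)"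
  by (induction as) (auto simp: lmult_lone_left lmult_assoc)

lemma homog_listprod: "homog (length ws) (listprod r ws)"
  by (induction ws) (auto dest: homog_lmult[OF homog_simps(3)])

lemma in_lam_listprod: "set ws \<subseteq> E \<Longrightarrow> in_lam E (listprod r ws)"
  by (induction ws) (auto simp: in_lam_gen)

lemma listprod_sorted: "sorted_wrt (<) ws \<Longrightarrow> listprod r ws = lmonom (set ws)"
proof (induction ws)
  case (Cons a ws)
  then have "inv_count {a} (set ws) = 0" "{a} \<inter> set ws = {}"
    by (auto simp: inv_count_singleton_left card_eq_0_iff)
  with Cons show ?case by (simp add: gen_eq_lmonom lmult_lmonom lscale_def)
qed (simp add: lone_eq_lmonom)

lemma remove_nth_Cons_0 [simp]: "remove_nth 0 (a # ws) = ws"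
  by (simp add: remove_nth_def)

lemma remove_nth_Cons_Suc [simp]: "remove_nth (Suc i) (a # ws) = a # remove_nth i ws"
  by (simp add: remove_nth_def)

lemma set_remove_nth: "set (remove_nth i ws) \<subseteq> set ws"
  unfolding remove_nth_def by (metis Un_subset_iff set_append set_drop_subset set_take_subset)

lemma length_remove_nth: "i < length ws \<Longrightarrow> length (remove_nth i ws) = length ws - 1"
  by (simp add: remove_nth_def)

lemma nth_remove_nth:
  "n < length xs \<Longrightarrow> i < length xs - 1 \<Longrightarrow> remove_nth n xs ! i = (if i < n then xs ! i else xs ! Suc i)"
  by (auto simp: remove_nth_def nth_append min_def)

definition omit_sum :: "nat \<Rightarrow> (nat \<Rightarrow> int) \<Rightarrow> ('e::linorder) list \<Rightarrow> 'e lam" where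
  "omit_sum r f ws = (\<lambda>U. \<Sum>i<length ws. f i * listprod r (remove_nth i ws) U)"

lemma arnold_eq_omit_sum:
  "length ws \<noteq> 1 \<Longrightarrow>
    arnold r src tgt ws vs = omit_sum r (\<lambda>i. if even r then (-1) ^ (i + 1) else eps src tgt ws vs i) ws"
  by (simp add: arnold_def omit_sum_def)

lemma omit_sum_Nil [simp]: "omit_sum r f [] = lzero"
  by (simp add: omit_sum_def lzero_def)

lemma lmult_sum_right:
  "finite I \<Longrightarrow> lmult r c (\<lambda>U. \<Sum>i\<in>I. k i * g i U) = (\<lambda>U. \<Sum>i\<in>I. k i * lmult r c (g i) U)"
  by (rule ext) (simp add: lmult_ksign sum_distrib_left sum_distrib_right algebra_simps sum.swap[where A = I])

lemma omit_sum_Cons: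
  "omit_sum r f (a # ws) = ladd (lscale (f 0) (listprod r ws)) (lmult r (gen a) (omit_sum r (\<lambda>i. f (Suc i)) ws))"
  unfolding omit_sum_def ladd_def lscale_def lmult_sum_right[OF finite_lessThan]
  by (simp only: length_Cons sum.lessThan_Suc_shift) simp

lemma finite_supp_omit_sum [simp]: "finite_supp (omit_sum r f ws)"
  unfolding finite_supp_def omit_sum_def
  by (metis (no_types, lifting) finite_supp_infinite finite_supp_listprod mult_zero_right sum.neutral)

lemma omit_sum_cong: "(\<And>i. i < length ws \<Longrightarrow> f i = g i) \<Longrightarrow> omit_sum r f ws = omit_sum r g ws"
  unfolding omit_sum_def by (intro ext sum.cong) auto

lemma omit_sum_scale: "omit_sum r (\<lambda>i. c * f i) ws = lscale c (omit_sum r f ws)"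
  unfolding omit_sum_def lscale_def by (simp add: sum_distrib_left mult.assoc)

lemma omit_sum_nonzero:
  assumes "omit_sum r f ws U \<noteq> 0"
  obtains i where "i < length ws" "listprod r (remove_nth i ws) U \<noteq> 0"
  using assms unfolding omit_sum_def by (metis (no_types, lifting) lessThan_iff mult_zero_right sum.neutral)

lemma homog_omit_sum: "homog (length ws - 1) (omit_sum r f ws)"
  unfolding homog_def
  by (metis omit_sum_nonzero homog_def homog_listprod length_remove_nth)

lemma in_lam_omit_sum: "set ws \<subseteq> E \<Longrightarrow> in_lam E (omit_sum r f ws)"
  unfolding in_lam_def
  by (metis omit_sum_nonzero in_lam_def in_lam_listprod set_remove_nth subset_trans)

lemma omit_sum_append:
  "omit_sum r f (as @ bs) = ladd (lmult r (omit_sum r f as) (listprod r bs))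
     (lmult r (listprod r as) (omit_sum r (\<lambda>i. f (i + length as)) bs))"
proof (induction as arbitrary: f)
  case Nil
  show ?case by (simp add: lmult_lone_left)
next
  case (Cons a as)
  show ?case
    unfolding append_Cons omit_sum_Cons Cons listprod_append
    by (simp add: lmult_ladd_left lmult_ladd_right lmult_lscale_left lmult_assoc)
      (rule ext, simp add: ladd_def lscale_def)
qed

lemma omit_sum_split:
  assumes coeff_X: "\<And>i. i < length X \<Longrightarrow> f i = g i"
    and coeff_M: "\<And>i. i < length M \<Longrightarrow> f (i + length X) = ksign r (length X) * h i"
    and coeff_Y: "\<And>i. i < length Y \<Longrightarrow> f (i + length M + length X) = ksign r (length M) * g (i + length X)"
  shows "omit_sum r f (X @ M @ Y) =
    ladd (lscale (ksign r (Suc (length X) * length M)) (lmult r (listprod r M) (omit_sum r g (X @ Y))))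
         (lscale (ksign r (length X)) (lmult r (lmult r (listprod r X) (omit_sum r h M)) (listprod r Y)))"
proof -
  define p q where "p = length X" and "q = length M"
  define DX DY where "DX = omit_sum r g X" and "DY = omit_sum r (\<lambda>i. g (i + p)) Y"
  define PX PM PY where "PX = listprod r X" and "PM = listprod r M" and "PY = listprod r Y"
  have DX_f: "omit_sum r f X = DX"
    unfolding DX_def using coeff_X by (rule omit_sum_cong)
  have DY_f: "omit_sum r (\<lambda>i. f (i + q + p)) Y = lscale (ksign r q) DY"
    unfolding DY_def omit_sum_scale[symmetric] p_def q_def using coeff_Y by (rule omit_sum_cong)
  have DM_f: "omit_sum r (\<lambda>i. f (i + p)) M = lscale (ksign r p) (omit_sum r h M)"
    unfolding omit_sum_scale[symmetric] p_def using coeff_M by (rule omit_sum_cong)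
  have whole: "omit_sum r f (X @ M @ Y) = ladd (lmult r DX (lmult r PM PY))
      (lmult r PX (ladd (lmult r (lscale (ksign r p) (omit_sum r h M)) PY) (lmult r PM (lscale (ksign r q) DY))))"
    unfolding omit_sum_append[of r f X] omit_sum_append[of r _ M] DX_f DM_f[symmetric] DY_f[symmetric]
    by (simp add: listprod_append PX_def PM_def PY_def p_def q_def add.assoc)
  have outer: "omit_sum r g (X @ Y) = ladd (lmult r DX PY) (lmult r PX DY)"
    unfolding omit_sum_append DX_def DY_def PX_def PY_def p_def ..
  (* DX has degree p - 1, and (p - 1) q has the parity of (p + 1) q *)
  have "lmult r DX PM = lscale (ksign r (Suc p * q)) (lmult r PM DX)"
  proof (cases "p = 0")
    case False
    have "ksign r ((p - 1) * q) = ksign r (Suc p * q)"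
      using False ksign_add[of r "(p - 1) * q" "q + q"]
      by (simp add: add_mult_distrib[symmetric] algebra_simps)
    then show ?thesis
      using lmult_commute_homog[OF homog_omit_sum[of X r g] homog_listprod[of M r], of r]
      by (simp add: DX_def PM_def p_def q_def)
  qed (simp add: DX_def p_def)
  moreover have "lmult r PX PM = lscale (ksign r (p * q)) (lmult r PM PX)"
    using lmult_commute_homog[OF homog_listprod[of X r] homog_listprod[of M r], of r]
    by (simp add: PX_def PM_def p_def q_def)
  ultimately show ?thesis
    unfolding whole outer PX_def[symmetric] PM_def[symmetric] PY_def[symmetric] p_def[symmetric] q_def[symmetric]
    by (simp add: lmult_ladd_left lmult_ladd_right lmult_lscale_left lmult_lscale_right
        lmult_assoc[symmetric] ksign_add[symmetric])
      (rule ext, simp add: ladd_def lscale_def ksign_add algebra_simps)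
qed

section \<open>Splitting off a generator\<close>

definition free_part :: "'e \<Rightarrow> 'e lam \<Rightarrow> 'e lam" where
  "free_part a x = (\<lambda>S. if a \<in> S then 0 else x S)"

definition shift_sign :: "nat \<Rightarrow> ('e::linorder) \<Rightarrow> 'e set \<Rightarrow> int" where
  "shift_sign r a U = ksign r (card {u \<in> U. a < u})"

(* For finitely supported x, x = free_part a x + cofactor r a x * gen a; shift_sign r a U is the sign
   of moving e_a from its sorted position in e_(insert a U) to the right end. *)
definition cofactor :: "nat \<Rightarrow> ('e::linorder) \<Rightarrow> 'e lam \<Rightarrow> 'e lam" where
  "cofactor r a x = (\<lambda>U. if a \<in> U then 0 else shift_sign r a U * x (insert a U))"

lemma shift_sign_Un:
  assumes "finite A" "finite B" "A \<inter> B = {}"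
  shows "shift_sign r a (A \<union> B) = shift_sign r a A * shift_sign r a B"
proof -
  have "{u \<in> A \<union> B. a < u} = {u \<in> A. a < u} \<union> {u \<in> B. a < u}" by auto
  then show ?thesis
    unfolding shift_sign_def using assms by (simp add: card_Un_disjoint ksign_add disjoint_iff)
qed

lemma shift_sign_less:
  assumes "finite T" "a \<notin> T"
  shows "shift_sign r a T * ksign r (card {t \<in> T. t < a}) = ksign r (card T)"
proof -
  have "T = {u \<in> T. a < u} \<union> {t \<in> T. t < a}" using assms(2) by auto (metis linorder_neqE)
  then have "card T = card {u \<in> T. a < u} + card {t \<in> T. t < a}"
    by (metis (no_types, lifting) assms(1) card_Un_disjoint disjoint_iff finite_Un mem_Collect_eq
        order_less_asym)
  then show ?thesis unfolding shift_sign_def by (simp add: ksign_add)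
qed

lemma shift_sign_mult_self [simp]: "shift_sign r a U * shift_sign r a U = 1"
  by (simp add: shift_sign_def)

lemma free_part_lmult: "free_part a (lmult r x y) = lmult r (free_part a x) (free_part a y)"
proof (rule ext)
  fix U
  show "free_part a (lmult r x y) U = lmult r (free_part a x) (free_part a y) U"
    unfolding free_part_def lmult_ksign by (cases "a \<in> U") (auto intro!: sum.neutral sum.cong)
qed

lemma free_part_gen: "free_part a (gen e) = (if e = a then lzero else gen e)"
  by (rule ext) (auto simp: free_part_def gen_def lzero_def)

lemma free_part_simps [simp]: "free_part a lone = lone" "free_part a lzero = lzero"
  by (rule ext, auto simp: free_part_def lone_def lzero_def)+

lemma free_part_ladd: "free_part a (ladd x y) = ladd (free_part a x) (free_part a y)"
  by (rule ext) (auto simp: free_part_def ladd_def)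

lemma free_part_lscale: "free_part a (lscale c x) = lscale c (free_part a x)"
  by (rule ext) (auto simp: free_part_def lscale_def)

lemma finite_supp_free_part [simp]: "finite_supp x \<Longrightarrow> finite_supp (free_part a x)"
  by (auto simp: free_part_def finite_supp_def)

lemma free_part_id: "in_lam (E - {a}) x \<Longrightarrow> free_part a x = x"
  by (rule ext) (auto simp: free_part_def in_lam_def)

lemma in_lam_free_part: "in_lam E x \<Longrightarrow> in_lam (E - {a}) (free_part a x)"
  by (auto simp: free_part_def in_lam_def)

lemma cofactor_ladd: "cofactor r a (ladd x y) = ladd (cofactor r a x) (cofactor r a y)"
  by (rule ext) (auto simp: cofactor_def ladd_def algebra_simps)

lemma cofactor_lsub: "cofactor r a (lsub x y) = lsub (cofactor r a x) (cofactor r a y)"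
  by (rule ext) (auto simp: cofactor_def lsub_def algebra_simps)

lemma cofactor_lscale: "cofactor r a (lscale c x) = lscale c (cofactor r a x)"
  by (rule ext) (auto simp: cofactor_def lscale_def algebra_simps)

lemma cofactor_simps [simp]: "cofactor r a lzero = lzero" "cofactor r a lone = lzero"
  by (rule ext, auto simp: cofactor_def lzero_def lone_def)+

lemma cofactor_gen: "cofactor r a (gen e) = (if e = a then lone else lzero)"
  by (rule ext) (auto simp: cofactor_def gen_def lzero_def lone_def shift_sign_def)

lemma cofactor_eq_lzero: "in_lam (E - {a}) x \<Longrightarrow> cofactor r a x = lzero"
  by (rule ext) (auto simp: cofactor_def in_lam_def lzero_def)

lemma in_lam_cofactor: "in_lam E x \<Longrightarrow> in_lam (E - {a}) (cofactor r a x)"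
  by (auto simp: cofactor_def in_lam_def)

lemma lam_eqI_free_part_cofactor:
  assumes "free_part a x = free_part a y" "cofactor r a x = cofactor r a y"
  shows "x = y"
proof (rule ext)
  fix U
  show "x U = y U"
  proof (cases "a \<in> U")
    case True
    then have "shift_sign r a (U - {a}) * x U = shift_sign r a (U - {a}) * y U"
      using fun_cong[OF assms(2), of "U - {a}"] by (simp add: cofactor_def insert_absorb)
    then show ?thesis
      by (metis mult_cancel_left mult_zero_left shift_sign_mult_self zero_neq_one)
  qed (use fun_cong[OF assms(1), of U] in \<open>simp add: free_part_def\<close>)
qed

lemma lmult_insert:
  assumes "finite U" "a \<notin> U"
  shows "lmult r x y (insert a U) =
      (\<Sum>S\<in>Pow U. x S * y (insert a (U - S)) * ksign r (inv_count S (insert a (U - S)))) +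
      (\<Sum>S\<in>Pow U. x (insert a S) * y (U - S) * ksign r (inv_count (insert a S) (U - S)))"
proof -
  let ?t = "\<lambda>S. x S * y (insert a U - S) * ksign r (inv_count S (insert a U - S))"
  have "lmult r x y (insert a U) = sum ?t (Pow U) + sum ?t (insert a ` Pow U)"
    unfolding lmult_ksign Pow_insert using assms by (intro sum.union_disjoint) auto
  moreover have "sum ?t (insert a ` Pow U) = sum (?t \<circ> insert a) (Pow U)"
  proof (rule sum.reindex)
    show "inj_on (insert a) (Pow U)"
      using assms unfolding inj_on_def by (metis Diff_insert_absorb PowD subsetD)
  qed
  moreover have "sum ?t (Pow U) =
      (\<Sum>S\<in>Pow U. x S * y (insert a (U - S)) * ksign r (inv_count S (insert a (U - S))))"
    using assms by (intro sum.cong) (auto simp: insert_Diff_if)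
  moreover have "sum (?t \<circ> insert a) (Pow U) =
      (\<Sum>S\<in>Pow U. x (insert a S) * y (U - S) * ksign r (inv_count (insert a S) (U - S)))"
    using assms by (intro sum.cong) auto
  ultimately show ?thesis by simp
qed

lemma shift_sign_split:
  "finite U \<Longrightarrow> S \<subseteq> U \<Longrightarrow> shift_sign r a U = shift_sign r a S * shift_sign r a (U - S)"
  by (metis Diff_disjoint Diff_partition finite_Diff finite_subset shift_sign_Un)

lemma shift_sign_inv_count_right:
  assumes "finite U" "a \<notin> U" "S \<subseteq> U"
  shows "shift_sign r a U * ksign r (inv_count S (insert a (U - S))) =
    shift_sign r a (U - S) * ksign r (inv_count S (U - S))"
proof -
  have "finite S" using assms finite_subset by blast
  then have "inv_count S (insert a (U - S)) = inv_count S {a} + inv_count S (U - S)"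
    using inv_count_Un_right[of S "{a}" "U - S"] assms by auto
  then have "ksign r (inv_count S (insert a (U - S))) = shift_sign r a S * ksign r (inv_count S (U - S))"
    by (simp add: ksign_add inv_count_singleton_right shift_sign_def)
  with shift_sign_split[OF assms(1,3)] show ?thesis
    by (metis (no_types, lifting) mult.assoc mult.left_commute mult_1 shift_sign_mult_self)
qed

lemma shift_sign_inv_count_left:
  assumes "finite U" "a \<notin> U" "S \<subseteq> U"
  shows "shift_sign r a U * ksign r (inv_count (insert a S) (U - S)) =
    shift_sign r a S * ksign r (card (U - S)) * ksign r (inv_count S (U - S))"
proof -
  have "finite S" using assms finite_subset by blast
  then have "inv_count (insert a S) (U - S) = inv_count {a} (U - S) + inv_count S (U - S)"
    using inv_count_Un_left[of "{a}" S "U - S"] assms by auto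
  then have "ksign r (inv_count (insert a S) (U - S)) =
      ksign r (card {t \<in> U - S. t < a}) * ksign r (inv_count S (U - S))"
    by (simp add: ksign_add inv_count_singleton_left)
  moreover have "shift_sign r a (U - S) * ksign r (card {t \<in> U - S. t < a}) = ksign r (card (U - S))"
    using assms by (intro shift_sign_less) auto
  ultimately show ?thesis
    using shift_sign_split[OF assms(1,3)] by (metis (no_types, lifting) mult.assoc)
qed

lemma cofactor_lmult:
  "cofactor r a (lmult r x y) =
    ladd (lmult r (free_part a x) (cofactor r a y)) (lmult r (cofactor r a x) (gradinv r (free_part a y)))"
proof (rule ext)
  fix U
  show "cofactor r a (lmult r x y) U =
    ladd (lmult r (free_part a x) (cofactor r a y)) (lmult r (cofactor r a x) (gradinv r (free_part a y))) U"
  proof (cases "a \<notin> U \<and> finite U")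
    case True
    then have "cofactor r a (lmult r x y) U =
      (\<Sum>S\<in>Pow U. x S * y (insert a (U - S)) * (shift_sign r a U * ksign r (inv_count S (insert a (U - S))))) +
      (\<Sum>S\<in>Pow U. x (insert a S) * y (U - S) * (shift_sign r a U * ksign r (inv_count (insert a S) (U - S))))"
      by (simp add: cofactor_def lmult_insert distrib_left sum_distrib_left algebra_simps)
    also have "\<dots> = lmult r (free_part a x) (cofactor r a y) U + lmult r (cofactor r a x) (gradinv r (free_part a y)) U"
      unfolding lmult_ksign using True
      by (intro arg_cong2[where f = "(+)"] sum.cong refl)
        (auto simp: shift_sign_inv_count_right shift_sign_inv_count_left free_part_def cofactor_def
           gradinv_ksign insert_Diff_if)
    finally show ?thesis by (simp add: ladd_def)
  next
    case False
    then consider "a \<in> U" | "infinite U" by blast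
    then show ?thesis
    proof cases
      case 1
      then show ?thesis
        unfolding cofactor_def ladd_def lmult_ksign free_part_def gradinv_ksign by (simp add: sum.neutral)
    qed (simp add: cofactor_def ladd_def lmult_infinite)
  qed
qed

lemma cofactor_lmult_gen: "finite_supp y \<Longrightarrow> cofactor r a (lmult r y (gen a)) = free_part a y"
  by (simp add: cofactor_lmult cofactor_gen free_part_gen lmult_lone_right)

lemma cofactor_lmult_free_left:
  "in_lam (E - {a}) x \<Longrightarrow> cofactor r a (lmult r x y) = lmult r x (cofactor r a y)"
  by (simp add: cofactor_lmult free_part_id cofactor_eq_lzero)

lemma cofactor_lmult_free_right:
  "in_lam (E - {a}) z \<Longrightarrow> cofactor r a (lmult r y z) = lmult r (cofactor r a y) (gradinv r z)"
  by (simp add: cofactor_lmult free_part_id cofactor_eq_lzero)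

lemma tlistprod_eq: "tlistprod r a ws = (free_part a (listprod r ws), cofactor r a (listprod r ws))"
proof (induction ws)
  case (Cons e ws)
  have "psi_gen a e = (free_part a (gen e), cofactor r a (gen e))"
    by (simp add: psi_gen_def free_part_gen cofactor_gen)
  with Cons show ?case
    by (simp add: tlistprod_def tmult_def free_part_lmult cofactor_lmult)
qed (simp add: tlistprod_def)

lemma g_map_eq_cofactor:
  assumes "finite E" "in_lam E x"
  shows "g_map r E a x = cofactor r a x"
proof (rule ext)
  fix U
  have "g_map r E a x U = (\<Sum>S\<in>Pow E. x S * cofactor r a (lmonom S) U)"
    unfolding g_map_def tlistprod_eq snd_conv using assms(1)
    by (intro sum.cong refl) (simp add: listprod_sorted finite_subset)
  also have "\<dots> = (if a \<in> U then 0 else shift_sign r a U * (\<Sum>S\<in>Pow E. if S = insert a U then x S else 0))"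
    by (auto simp: cofactor_def lmonom_def sum_distrib_left intro!: sum.cong)
  also have "\<dots> = cofactor r a x U"
    using assms by (auto simp: cofactor_def in_lam_def)
  finally show "g_map r E a x U = cofactor r a x U" .
qed

lemma free_part_listprod: "a \<notin> set ws \<Longrightarrow> free_part a (listprod r ws) = listprod r ws"
  by (rule free_part_id[where E = "set ws"]) (simp add: in_lam_listprod)

lemma free_part_omit_sum: "a \<notin> set ws \<Longrightarrow> free_part a (omit_sum r f ws) = omit_sum r f ws"
  by (rule free_part_id[where E = "set ws"]) (simp add: in_lam_omit_sum)

lemma cofactor_omit_sum: "a \<notin> set ws \<Longrightarrow> cofactor r a (omit_sum r f ws) = lzero"
  by (rule cofactor_eq_lzero[where E = "set ws"]) (simp add: in_lam_omit_sum)

lemma free_part_omit_sum_single: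
  assumes "a \<notin> set P" "a \<notin> set Q"
  shows "free_part a (omit_sum r f (P @ a # Q)) = lscale (f (length P)) (listprod r (P @ Q))"
  using assms
  by (simp add: omit_sum_append omit_sum_Cons free_part_ladd free_part_lmult free_part_lscale free_part_gen
      free_part_listprod free_part_omit_sum listprod_append lmult_lscale_right)

lemma cofactor_omit_sum_single:
  assumes "a \<notin> set P" "a \<notin> set Q"
    and coeff_P: "\<And>i. i < length P \<Longrightarrow> g i = f i"
    and coeff_Q: "\<And>i. i < length Q \<Longrightarrow> f (Suc (i + length P)) = ksign r 1 * g (i + length P)"
  shows "cofactor r a (omit_sum r f (P @ a # Q)) = lscale (ksign r (length Q)) (omit_sum r g (P @ Q))"
proof -
  define DQ where "DQ = omit_sum r (\<lambda>i. g (i + length P)) Q"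
  have free: "in_lam (UNIV - {a}) (listprod r P)" "in_lam (UNIV - {a}) (listprod r Q)"
    "in_lam (UNIV - {a}) (omit_sum r h P)" "in_lam (UNIV - {a}) (omit_sum r h Q)" for h
    using assms(1,2) by (auto intro: in_lam_mono in_lam_listprod in_lam_omit_sum)
  have gen_left: "cofactor r a (lmult r (gen a) z) = gradinv r z"
    if "in_lam (UNIV - {a}) z" "finite_supp z" for z
    using that by (simp add: cofactor_lmult_free_right cofactor_gen lmult_lone_left)
  have DP: "omit_sum r f P = omit_sum r g P"
    using coeff_P by (intro omit_sum_cong) simp
  have DQ_f: "omit_sum r (\<lambda>i. f (Suc (i + length P))) Q = lscale (ksign r 1) DQ"
    unfolding DQ_def omit_sum_scale[symmetric] using coeff_Q by (rule omit_sum_cong)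
  have sign: "ksign r 1 * ksign r (length Q - 1) = ksign r (length Q)" if "Q \<noteq> []"
    using that ksign_add[of r 1 "length Q - 1"] by simp
  have "omit_sum r f (P @ a # Q) = ladd (lmult r (omit_sum r g P) (lmult r (gen a) (listprod r Q)))
      (lmult r (listprod r P) (ladd (lscale (f (length P)) (listprod r Q)) (lmult r (gen a) (lscale (ksign r 1) DQ))))"
    by (simp add: omit_sum_append omit_sum_Cons DP DQ_f)
  then have "cofactor r a (omit_sum r f (P @ a # Q)) =
      ladd (lmult r (omit_sum r g P) (gradinv r (listprod r Q))) (lmult r (listprod r P) (gradinv r (lscale (ksign r 1) DQ)))"
    using free
    by (simp add: cofactor_ladd cofactor_lmult_free_left[where E = UNIV] gen_left cofactor_lscale
        cofactor_eq_lzero[where E = UNIV] DQ_def)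
  also have "\<dots> = lscale (ksign r (length Q)) (omit_sum r g (P @ Q))"
    unfolding gradinv_homog[OF homog_listprod] gradinv_lscale gradinv_homog[OF homog_omit_sum] DQ_def
      omit_sum_append
    by (cases "Q = []")
      (simp_all add: lmult_lscale_left lmult_lscale_right, simp add: lscale_def ladd_def sign[simplified] distrib_left)
  finally show ?thesis .
qed

section \<open>Closed walks and Arnold classes\<close>

definition walk :: "('e \<Rightarrow> 'v) \<Rightarrow> ('e \<Rightarrow> 'v) \<Rightarrow> 'e list \<Rightarrow> 'v list \<Rightarrow> bool" where
  "walk src tgt ws vs \<longleftrightarrow> length vs = Suc (length ws) \<and>
     (\<forall>i<length ws. {src (ws ! i), tgt (ws ! i)} = {vs ! i, vs ! Suc i})"

(* Unlike circuit, the vertex list of a closed walk repeats its first vertex at the end. *)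
definition closed_walk :: "'e set \<Rightarrow> ('e \<Rightarrow> 'v) \<Rightarrow> ('e \<Rightarrow> 'v) \<Rightarrow> 'e list \<Rightarrow> 'v list \<Rightarrow> bool" where
  "closed_walk E src tgt ws vs \<longleftrightarrow> ws \<noteq> [] \<and> set ws \<subseteq> E \<and> walk src tgt ws vs \<and> vs ! 0 = vs ! length ws"

definition edge_sign :: "('e \<Rightarrow> 'v) \<Rightarrow> ('e \<Rightarrow> 'v) \<Rightarrow> 'e \<Rightarrow> 'v \<Rightarrow> 'v \<Rightarrow> int" where
  "edge_sign src tgt e u v = (if src e = u \<and> tgt e = v then 1 else -1)"

definition walk_coeff :: "nat \<Rightarrow> ('e \<Rightarrow> 'v) \<Rightarrow> ('e \<Rightarrow> 'v) \<Rightarrow> 'e list \<Rightarrow> 'v list \<Rightarrow> nat \<Rightarrow> int" where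
  "walk_coeff r src tgt ws vs i =
     (if even r then (-1) ^ (i + 1) else edge_sign src tgt (ws ! i) (vs ! i) (vs ! Suc i))"

definition arnold_walk :: "nat \<Rightarrow> ('e \<Rightarrow> 'v) \<Rightarrow> ('e \<Rightarrow> 'v) \<Rightarrow> ('e::linorder) list \<Rightarrow> 'v list \<Rightarrow> 'e lam" where
  "arnold_walk r src tgt ws vs = omit_sum r (walk_coeff r src tgt ws vs) ws"

lemma walk_coeff_mult_self [simp]: "walk_coeff r src tgt ws vs i * walk_coeff r src tgt ws vs i = 1"
  by (simp add: walk_coeff_def edge_sign_def flip: power_add)

lemma walk_coeff_shift:
  assumes "r \<ge> 1" "j \<le> i"
    and "edge_sign src tgt (ws ! i) (vs ! i) (vs ! Suc i) = edge_sign src' tgt' (ws' ! j) (vs' ! j) (vs' ! Suc j)"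
  shows "walk_coeff r src tgt ws vs i = ksign r (i - j) * walk_coeff r src' tgt' ws' vs' j"
proof (cases "even r")
  case True
  have "(-1::int) ^ (i + 1) = (-1) ^ (i - j) * (-1) ^ (j + 1)"
    using assms(2) by (simp flip: power_add)
  with True assms(1) show ?thesis by (simp add: walk_coeff_def ksign_even)
qed (use assms(3) in \<open>simp add: walk_coeff_def ksign_odd\<close>)

lemma walk_take: "walk src tgt ws vs \<Longrightarrow> p \<le> length ws \<Longrightarrow> walk src tgt (take p ws) (take (Suc p) vs)"
  by (simp add: walk_def)

lemma walk_drop: "walk src tgt ws vs \<Longrightarrow> p \<le> length ws \<Longrightarrow> walk src tgt (drop p ws) (drop p vs)"
  by (simp add: walk_def)

lemma walk_append:
  assumes "walk src tgt ws vs" "walk src tgt ws' vs'" "vs ! length ws = vs' ! 0"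
  shows "walk src tgt (ws @ ws') (butlast vs @ vs')"
  unfolding walk_def
proof (intro conjI allI impI)
  show "length (butlast vs @ vs') = Suc (length (ws @ ws'))"
    using assms(1,2) by (simp add: walk_def)
next
  fix i assume i: "i < length (ws @ ws')"
  have lv: "length (butlast vs) = length ws" using assms(1) by (simp add: walk_def)
  consider "Suc i < length ws" | "Suc i = length ws" | "length ws \<le> i" by linarith
  then show "{src ((ws @ ws') ! i), tgt ((ws @ ws') ! i)} = {(butlast vs @ vs') ! i, (butlast vs @ vs') ! Suc i}"
  proof cases
    case 1 with assms(1) lv show ?thesis by (simp add: walk_def nth_append nth_butlast)
  next
    case 2 with assms(1,3) lv show ?thesis by (simp add: walk_def nth_append nth_butlast)
  next
    case 3 with assms(2) lv i show ?thesis by (simp add: walk_def nth_append Suc_diff_le)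
  qed
qed

lemma closed_walk_split:
  assumes cw: "closed_walk E src tgt ws vs" and pq: "p < q" "q < length ws" and eq: "vs ! p = vs ! q"
  shows "closed_walk E src tgt (take (q - p) (drop p ws)) (take (Suc (q - p)) (drop p vs))"
    and "closed_walk E src tgt (take p ws @ drop q ws) (take p vs @ drop q vs)"
proof -
  have w: "walk src tgt ws vs" and lv: "length vs = Suc (length ws)" and sE: "set ws \<subseteq> E"
    and cl: "vs ! 0 = vs ! length ws"
    using cw by (auto simp: closed_walk_def walk_def)
  have "set (take (q - p) (drop p ws)) \<subseteq> E" "set (take p ws @ drop q ws) \<subseteq> E"
    using sE by (auto dest: in_set_takeD in_set_dropD)
  moreover have "walk src tgt (take (q - p) (drop p ws)) (take (Suc (q - p)) (drop p vs))"
    using pq by (intro walk_take walk_drop w) auto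
  moreover have "walk src tgt (take p ws @ drop q ws) (butlast (take (Suc p) vs) @ drop q vs)"
    using pq eq lv by (intro walk_append walk_take walk_drop w) auto
  moreover have "butlast (take (Suc p) vs) = take p vs"
    using pq lv by (simp add: butlast_take)
  ultimately show "closed_walk E src tgt (take (q - p) (drop p ws)) (take (Suc (q - p)) (drop p vs))"
    and "closed_walk E src tgt (take p ws @ drop q ws) (take p vs @ drop q vs)"
    using pq eq cl lv by (auto simp: closed_walk_def nth_append min_def)
qed

lemma arnold_walk_split:
  assumes cw: "closed_walk E src tgt ws vs" and pq: "p < q" "q < length ws" and eq: "vs ! p = vs ! q"
    and r: "r \<ge> 1"
  defines "X \<equiv> take p ws" and "M \<equiv> take (q - p) (drop p ws)" and "Y \<equiv> drop q ws"
    and "vM \<equiv> take (Suc (q - p)) (drop p vs)" and "vXY \<equiv> take p vs @ drop q vs"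
  shows "arnold_walk r src tgt ws vs =
    ladd (lscale (ksign r (Suc p * (q - p))) (lmult r (listprod r M) (arnold_walk r src tgt (X @ Y) vXY)))
         (lscale (ksign r p) (lmult r (lmult r (listprod r X) (arnold_walk r src tgt M vM)) (listprod r Y)))"
proof -
  have lv: "length vs = Suc (length ws)" using cw by (simp add: closed_walk_def walk_def)
  have lX: "length X = p" and lM: "length M = q - p"
    using pq by (simp_all add: X_def M_def)
  have ws: "ws = X @ M @ Y"
    using pq unfolding X_def M_def Y_def
    by (metis append_take_drop_id drop_drop le_add_diff_inverse2 less_imp_le)
  have nth_XY: "(X @ Y) ! i = ws ! i" "vXY ! i = vs ! i" if "i < p" for i
    using that pq lv by (simp_all add: X_def vXY_def nth_append)
  have nth_vXY_p: "vXY ! p = vs ! p"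
    using pq lv eq by (simp add: vXY_def nth_append)
  have nth_XY_Y: "(X @ Y) ! (i + p) = ws ! (i + (q - p) + p)" "vXY ! (i + p) = vs ! (i + (q - p) + p)"
    if "i \<le> length Y" for i
    using that pq lv by (simp_all add: X_def Y_def vXY_def nth_append add.commute)
  have nth_M: "M ! i = ws ! (i + p)" if "i < q - p" for i
    using that pq by (simp add: M_def add.commute)
  have nth_vM: "vM ! i = vs ! (i + p)" if "i \<le> q - p" for i
    using that pq lv by (simp add: vM_def add.commute)
  have "omit_sum r (walk_coeff r src tgt ws vs) (X @ M @ Y) =
    ladd (lscale (ksign r (Suc (length X) * length M)) (lmult r (listprod r M) (arnold_walk r src tgt (X @ Y) vXY)))
         (lscale (ksign r (length X)) (lmult r (lmult r (listprod r X) (arnold_walk r src tgt M vM)) (listprod r Y)))"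
    unfolding arnold_walk_def
  proof (rule omit_sum_split)
    fix i assume i: "i < length X"
    then have "vXY ! Suc i = vs ! Suc i"
      using nth_XY(2)[of "Suc i"] nth_vXY_p lX by (cases "Suc i = p") auto
    then have "walk_coeff r src tgt ws vs i = ksign r (i - i) * walk_coeff r src tgt (X @ Y) vXY i"
      using i nth_XY lX by (intro walk_coeff_shift r) simp_all
    then show "walk_coeff r src tgt ws vs i = walk_coeff r src tgt (X @ Y) vXY i" by simp
  next
    fix i assume i: "i < length M"
    have "walk_coeff r src tgt ws vs (i + p) = ksign r (i + p - i) * walk_coeff r src tgt M vM i"
      using i nth_M[of i] nth_vM[of i] nth_vM[of "Suc i"] lM by (intro walk_coeff_shift r) simp_all
    then show "walk_coeff r src tgt ws vs (i + length X) = ksign r (length X) * walk_coeff r src tgt M vM i"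
      using lX by simp
  next
    fix i assume i: "i < length Y"
    have "walk_coeff r src tgt ws vs (i + (q - p) + p) =
        ksign r (i + (q - p) + p - (i + p)) * walk_coeff r src tgt (X @ Y) vXY (i + p)"
      using i nth_XY_Y[of i] nth_XY_Y[of "Suc i"] by (intro walk_coeff_shift r) simp_all
    then show "walk_coeff r src tgt ws vs (i + length M + length X) =
        ksign r (length M) * walk_coeff r src tgt (X @ Y) vXY (i + length X)"
      using lX lM by simp
  qed
  then show ?thesis
    unfolding arnold_walk_def[of r src tgt ws] using ws lX lM by simp
qed

lemma closed_walk_of_circuit:
  assumes "circuit E src tgt ws vs"
  shows "closed_walk E src tgt ws (vs @ [vs ! 0])"
    and "length ws \<ge> 2 \<Longrightarrow> arnold r src tgt ws vs = arnold_walk r src tgt ws (vs @ [vs ! 0])"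
proof -
  have k: "length ws \<ge> 1" "length vs = length ws" "set ws \<subseteq> E"
    and ch: "\<forall>i < length ws. {src (ws ! i), tgt (ws ! i)} = {vs ! i, vs ! ((i + 1) mod length ws)}"
    using assms by (auto simp: circuit_def)
  have cur: "(vs @ [vs ! 0]) ! i = vs ! i" if "i < length ws" for i
    using that k by (simp add: nth_append)
  have nxt: "(vs @ [vs ! 0]) ! Suc i = vs ! ((i + 1) mod length ws)" if "i < length ws" for i
    using that k by (cases "Suc i = length ws") (simp_all add: nth_append)
  show "closed_walk E src tgt ws (vs @ [vs ! 0])"
    unfolding closed_walk_def walk_def using k ch cur nxt by (auto simp: nth_append)
  assume "length ws \<ge> 2"
  then have "length ws \<noteq> 1" by simp
  then show "arnold r src tgt ws vs = arnold_walk r src tgt ws (vs @ [vs ! 0])"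
    unfolding arnold_eq_omit_sum[OF \<open>length ws \<noteq> 1\<close>] arnold_walk_def
    by (intro omit_sum_cong) (simp add: walk_coeff_def eps_def edge_sign_def cur nxt)
qed

lemma circuit_of_closed_walk:
  assumes "closed_walk E src tgt ws vs"
  shows "circuit E src tgt ws (butlast vs)" and "butlast vs @ [butlast vs ! 0] = vs"
proof -
  have k: "ws \<noteq> []" "set ws \<subseteq> E" "length vs = Suc (length ws)" "vs ! 0 = vs ! length ws"
    and ch: "\<forall>i<length ws. {src (ws ! i), tgt (ws ! i)} = {vs ! i, vs ! Suc i}"
    using assms by (auto simp: closed_walk_def walk_def)
  have bl: "butlast vs ! i = vs ! i" if "i < length ws" for i
    using that k by (simp add: nth_butlast)
  have "butlast vs @ [last vs] = vs" using k by (metis append_butlast_last_id list.size(3) nat.distinct(1))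
  moreover have "last vs = butlast vs ! 0" using k bl
    by (metis diff_Suc_1 last_conv_nth length_greater_0_conv list.size(3) nat.distinct(1))
  ultimately show "butlast vs @ [butlast vs ! 0] = vs" by simp
  have "butlast vs ! ((i + 1) mod length ws) = vs ! Suc i" if "i < length ws" for i
    using that bl k by (cases "Suc i = length ws") simp_all
  then show "circuit E src tgt ws (butlast vs)"
    unfolding circuit_def using k ch bl by (auto simp: Suc_le_eq)
qed

lemma closed_walk_length_ge_2:
  assumes "closed_walk E src tgt ws vs" "\<forall>e\<in>E. src e \<noteq> tgt e"
  shows "length ws \<ge> 2"
proof (rule ccontr)
  assume "\<not> length ws \<ge> 2"
  moreover have "ws \<noteq> []" using assms by (simp add: closed_walk_def)
  ultimately have "length ws = 1" using length_greater_0_conv[of ws] by linarith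
  then have "{src (ws ! 0), tgt (ws ! 0)} = {vs ! 0, vs ! 1}" "vs ! 0 = vs ! 1" "ws ! 0 \<in> E"
    using assms(1) by (auto simp: closed_walk_def walk_def)
  then show False using assms(2) by (metis doubleton_eq_iff)
qed

lemma arnold_walk_in_ideal:
  assumes "closed_walk E src tgt ws vs" "\<forall>e\<in>E. src e \<noteq> tgt e"
  shows "arnold_walk r src tgt ws vs \<in> arnold_ideal r E src tgt"
  using arnold_ideal.gen[OF circuit_of_closed_walk(1)[OF assms(1)]]
    closed_walk_of_circuit(2)[OF circuit_of_closed_walk(1)[OF assms(1)] closed_walk_length_ge_2[OF assms]]
  by (simp add: circuit_of_closed_walk(2)[OF assms(1)])

lemma arnold_ideal_finite_supp: "x \<in> arnold_ideal r E src tgt \<Longrightarrow> finite_supp x"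
proof (induction rule: arnold_ideal.induct)
  case (gen ws vs)
  then show ?case by (cases "length ws = 1") (simp add: arnold_def, simp add: arnold_eq_omit_sum)
qed simp_all

lemma arnold_ideal_in_lam: "x \<in> arnold_ideal r E src tgt \<Longrightarrow> in_lam E x"
proof (induction rule: arnold_ideal.induct)
  case (gen ws vs)
  then have "set ws \<subseteq> E" by (simp add: circuit_def)
  then show ?case
    by (cases "length ws = 1") (simp add: arnold_def, simp add: arnold_eq_omit_sum in_lam_omit_sum)
qed simp_all

lemma arnold_ideal_lscale: "x \<in> arnold_ideal r E src tgt \<Longrightarrow> lscale c x \<in> arnold_ideal r E src tgt"
  using arnold_ideal.lmul[of x r E src tgt "lscale c lone"]
  by (simp add: lmult_lscale_left lmult_lone_left arnold_ideal_finite_supp)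

lemma arnold_ideal_gradinv: "x \<in> arnold_ideal r E src tgt \<Longrightarrow> gradinv r x \<in> arnold_ideal r E src tgt"
proof (induction rule: arnold_ideal.induct)
  case (gen ws vs)
  show ?case
  proof (cases "length ws = 1")
    case False
    then have "gradinv r (arnold r src tgt ws vs) = lscale (ksign r (length ws - 1)) (arnold r src tgt ws vs)"
      by (simp add: arnold_eq_omit_sum gradinv_homog[OF homog_omit_sum])
    then show ?thesis using arnold_ideal_lscale[OF arnold_ideal.gen[OF gen]] by simp
  qed (use arnold_ideal.gen[OF gen] in \<open>simp add: arnold_def\<close>)
qed (simp_all add: gradinv_ladd gradinv_lmult arnold_ideal.intros)

lemma arnold_ideal_loop:
  assumes "finite E" "\<beta> \<in> E" "src \<beta> = tgt \<beta>" "in_lam E y"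
  shows "y \<in> arnold_ideal r E src tgt"
proof -
  have "circuit E src tgt [\<beta>] [src \<beta>]" using assms(2,3) by (simp add: circuit_def)
  from arnold_ideal.gen[OF this, of r] have "lone \<in> arnold_ideal r E src tgt"
    by (simp add: arnold_def)
  from arnold_ideal.rmul[OF this assms(4)] show ?thesis
    using in_lam_finite_supp[OF assms(1,4)] by (simp add: lmult_lone_left)
qed

definition ideal_closed :: "nat \<Rightarrow> ('e::linorder) set \<Rightarrow> 'e lam set \<Rightarrow> bool" where
  "ideal_closed r E T \<longleftrightarrow> lzero \<in> T \<and> (\<forall>x\<in>T. \<forall>y\<in>T. ladd x y \<in> T) \<and> (\<forall>c. \<forall>x\<in>T. lscale c x \<in> T) \<and>
     (\<forall>x\<in>T. \<forall>y. in_lam E y \<longrightarrow> lmult r y x \<in> T \<and> lmult r x y \<in> T)"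

lemma ideal_closedI:
  assumes "lzero \<in> T" "\<And>x y. x \<in> T \<Longrightarrow> y \<in> T \<Longrightarrow> ladd x y \<in> T" "\<And>c x. x \<in> T \<Longrightarrow> lscale c x \<in> T"
    and "\<And>x y. x \<in> T \<Longrightarrow> in_lam E y \<Longrightarrow> lmult r y x \<in> T"
    and "\<And>x y. x \<in> T \<Longrightarrow> in_lam E y \<Longrightarrow> lmult r x y \<in> T"
  shows "ideal_closed r E T"
  using assms by (simp add: ideal_closed_def)

lemma nth_eq_of_not_distinct:
  assumes "\<not> distinct (take k xs)" "k \<le> length xs"
  obtains p q where "p < q" "q < k" "xs ! p = xs ! q"
proof -
  obtain i j where "i < k" "j < k" "i \<noteq> j" "xs ! i = xs ! j"
    using assms by (auto simp: distinct_conv_nth)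
  then show ?thesis using that by (metis linorder_neqE_nat)
qed

lemma arnold_walk_mem_ideal_closed:
  assumes "r \<ge> 1" "ideal_closed r E T"
    and simple: "\<And>ws vs. closed_walk E src tgt ws vs \<Longrightarrow> distinct (take (length ws) vs) \<Longrightarrow>
      arnold_walk r src tgt ws vs \<in> T"
  shows "closed_walk E src tgt ws vs \<Longrightarrow> arnold_walk r src tgt ws vs \<in> T"
proof (induction "length ws" arbitrary: ws vs rule: less_induct)
  case less
  show ?case
  proof (cases "distinct (take (length ws) vs)")
    case False
    have "length vs = Suc (length ws)" and sE: "set ws \<subseteq> E"
      using less.prems by (auto simp: closed_walk_def walk_def)
    then obtain p q where pq: "p < q" "q < length ws" "vs ! p = vs ! q"
      using nth_eq_of_not_distinct[OF False] by (metis le_add2 plus_1_eq_Suc)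
    let ?X = "take p ws" and ?M = "take (q - p) (drop p ws)" and ?Y = "drop q ws"
    have "in_lam E (listprod r ?X)" "in_lam E (listprod r ?M)" "in_lam E (listprod r ?Y)"
      using sE by (auto intro!: in_lam_listprod dest: in_set_takeD in_set_dropD)
    moreover have "arnold_walk r src tgt ?M (take (Suc (q - p)) (drop p vs)) \<in> T"
      "arnold_walk r src tgt (?X @ ?Y) (take p vs @ drop q vs) \<in> T"
      using pq by (auto intro!: less.hyps closed_walk_split[OF less.prems pq])
    ultimately show ?thesis
      using assms(2) unfolding arnold_walk_split[OF less.prems pq assms(1)] ideal_closed_def by simp
  qed (use simple less.prems in blast)
qed

lemma arnold_ideal_subset:
  assumes "r \<ge> 1" "\<forall>e\<in>E. src e \<noteq> tgt e" "ideal_closed r E T"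
    and "\<And>ws vs. closed_walk E src tgt ws vs \<Longrightarrow> distinct (take (length ws) vs) \<Longrightarrow>
      arnold_walk r src tgt ws vs \<in> T"
  shows "arnold_ideal r E src tgt \<subseteq> T"
proof
  fix x assume "x \<in> arnold_ideal r E src tgt"
  then show "x \<in> T"
  proof (induction rule: arnold_ideal.induct)
    case (gen ws vs)
    note cw = closed_walk_of_circuit(1)[OF gen]
    show ?case
      using arnold_walk_mem_ideal_closed[OF assms(1,3,4) cw]
        closed_walk_of_circuit(2)[OF gen closed_walk_length_ge_2[OF cw assms(2)]] by simp
  qed (use assms(3) in \<open>simp_all add: ideal_closed_def\<close>)
qed

lemma listprod_in_arnold_ideal:
  assumes cw: "closed_walk E src tgt ws vs" and loopless: "\<forall>e\<in>E. src e \<noteq> tgt e"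
  shows "listprod r ws \<in> arnold_ideal r E src tgt"
proof -
  obtain w ws' where ws: "ws = w # ws'" using cw by (cases ws) (auto simp: closed_walk_def)
  then have "w \<in> E" using cw by (auto simp: closed_walk_def)
  define c where "c = walk_coeff r src tgt ws vs 0"
  have "lmult r (gen w) (arnold_walk r src tgt ws vs) = lscale c (listprod r ws)"
    unfolding arnold_walk_def ws omit_sum_Cons c_def
    by (simp add: lmult_ladd_right lmult_lscale_right lmult_assoc[symmetric] lmult_gen_gen)
  moreover have "lmult r (gen w) (arnold_walk r src tgt ws vs) \<in> arnold_ideal r E src tgt"
    using arnold_walk_in_ideal[OF assms] \<open>w \<in> E\<close> by (intro arnold_ideal.lmul in_lam_gen)
  ultimately have "lscale c (lscale c (listprod r ws)) \<in> arnold_ideal r E src tgt"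
    by (metis arnold_ideal_lscale)
  then show ?thesis by (simp add: c_def)
qed

section \<open>Contracting an edge\<close>

(* Here f is any map of vertices; the contraction Gamma/alpha is the case f = contr_vert src tgt alpha. *)

lemma walk_map:
  assumes "walk src tgt ws vs"
  shows "walk (f \<circ> src) (f \<circ> tgt) ws (map f vs)"
  unfolding walk_def
proof (intro conjI allI impI)
  show "length (map f vs) = Suc (length ws)" using assms by (simp add: walk_def)
next
  fix i assume i: "i < length ws"
  have "{(f \<circ> src) (ws ! i), (f \<circ> tgt) (ws ! i)} = f ` {src (ws ! i), tgt (ws ! i)}" by simp
  also have "\<dots> = f ` {vs ! i, vs ! Suc i}" using assms i by (simp add: walk_def)
  also have "\<dots> = {map f vs ! i, map f vs ! Suc i}" using assms i by (simp add: walk_def)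
  finally show "{(f \<circ> src) (ws ! i), (f \<circ> tgt) (ws ! i)} = {map f vs ! i, map f vs ! Suc i}" .
qed

lemma edge_sign_map:
  assumes "f (src e) \<noteq> f (tgt e)" "{src e, tgt e} = {u, v}"
  shows "edge_sign (f \<circ> src) (f \<circ> tgt) e (f u) (f v) = edge_sign src tgt e u v"
  using assms unfolding edge_sign_def by (metis comp_apply doubleton_eq_iff)

lemma closed_walk_map:
  assumes cw: "closed_walk E src tgt ws vs" and "\<alpha> \<notin> set ws"
    and sep: "\<forall>e\<in>E - {\<alpha>}. f (src e) \<noteq> f (tgt e)" and "r \<ge> 1"
  shows "closed_walk (E - {\<alpha>}) (f \<circ> src) (f \<circ> tgt) ws (map f vs)"
    and "arnold_walk r (f \<circ> src) (f \<circ> tgt) ws (map f vs) = arnold_walk r src tgt ws vs"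
proof -
  have w: "walk src tgt ws vs" and lv: "length vs = Suc (length ws)" and sE: "set ws \<subseteq> E"
    using cw by (auto simp: closed_walk_def walk_def)
  then show "closed_walk (E - {\<alpha>}) (f \<circ> src) (f \<circ> tgt) ws (map f vs)"
    using cw assms(2) walk_map[OF w] by (auto simp: closed_walk_def)
  show "arnold_walk r (f \<circ> src) (f \<circ> tgt) ws (map f vs) = arnold_walk r src tgt ws vs"
    unfolding arnold_walk_def
  proof (rule omit_sum_cong)
    fix i assume i: "i < length ws"
    then have "ws ! i \<in> E - {\<alpha>}" using sE assms(2) nth_mem by fastforce
    then have "edge_sign (f \<circ> src) (f \<circ> tgt) (ws ! i) (map f vs ! i) (map f vs ! Suc i) =
        edge_sign src tgt (ws ! i) (vs ! i) (vs ! Suc i)"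
      using i lv w sep by (simp add: walk_def edge_sign_map)
    then show "walk_coeff r (f \<circ> src) (f \<circ> tgt) ws (map f vs) i = walk_coeff r src tgt ws vs i"
      using walk_coeff_shift[OF assms(4) order_refl, of "f \<circ> src" "f \<circ> tgt" ws i "map f vs" src tgt ws vs]
      by simp
  qed
qed

lemma walk_glue:
  assumes "walk src tgt ws vs" "j < length ws" "ws ! j = \<alpha>" "f (src \<alpha>) = f (tgt \<alpha>)"
  shows "f (vs ! j) = f (vs ! Suc j)"
  using assms by (auto simp: walk_def doubleton_eq_iff)

lemma nth_map_remove_nth:
  "j < length vs \<Longrightarrow> i < length vs - 1 \<Longrightarrow>
    map f (remove_nth j vs) ! i = f (vs ! (if i < j then i else Suc i))"
  by (simp add: nth_remove_nth length_remove_nth)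

lemma closed_walk_contract_single:
  assumes cw: "closed_walk E src tgt (P @ \<alpha> # Q) vs" and "src \<alpha> \<noteq> tgt \<alpha>"
    and glue: "f (src \<alpha>) = f (tgt \<alpha>)" and "\<alpha> \<notin> set P" "\<alpha> \<notin> set Q"
  shows "closed_walk (E - {\<alpha>}) (f \<circ> src) (f \<circ> tgt) (P @ Q) (map f (remove_nth (length P) vs))"
proof -
  define j where "j = length P"
  have w: "walk src tgt (P @ \<alpha> # Q) vs" and lv: "length vs = Suc (Suc (j + length Q))"
    and sE: "set (P @ \<alpha> # Q) \<subseteq> E" and cl: "vs ! 0 = vs ! Suc (j + length Q)"
    using cw by (auto simp: closed_walk_def walk_def j_def)
  have fj: "f (vs ! j) = f (vs ! Suc j)"
    using walk_glue[OF w _ _ glue] by (simp add: j_def)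
  have "walk (f \<circ> src) (f \<circ> tgt) (P @ Q) (butlast (map f (take (Suc j) vs)) @ map f (drop (Suc j) vs))"
    using walk_take[OF w, of j] walk_drop[OF w, of "Suc j"] lv fj
    by (intro walk_append walk_map) (simp_all add: j_def)
  moreover have "butlast (map f (take (Suc j) vs)) @ map f (drop (Suc j) vs) = map f (remove_nth j vs)"
    using lv by (simp add: remove_nth_def butlast_take map_butlast[symmetric])
  moreover have "P @ Q \<noteq> []"
    using cw assms(2) by (auto simp: closed_walk_def walk_def)
  moreover have "map f (remove_nth j vs) ! 0 = map f (remove_nth j vs) ! (j + length Q)"
    using lv cl fj by (cases "j = 0") (simp_all add: nth_map_remove_nth)
  ultimately show ?thesis
    using sE assms(4,5) by (auto simp: closed_walk_def j_def)
qed

lemma cofactor_arnold_walk_single: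
  assumes cw: "closed_walk E src tgt (P @ \<alpha> # Q) vs"
    and glue: "f (src \<alpha>) = f (tgt \<alpha>)" and \<alpha>: "\<alpha> \<notin> set P" "\<alpha> \<notin> set Q"
    and sep: "\<forall>e\<in>E - {\<alpha>}. f (src e) \<noteq> f (tgt e)" and r: "r \<ge> 1"
  shows "cofactor r \<alpha> (arnold_walk r src tgt (P @ \<alpha> # Q) vs) =
    lscale (ksign r (length Q)) (arnold_walk r (f \<circ> src) (f \<circ> tgt) (P @ Q) (map f (remove_nth (length P) vs)))"
proof -
  define j ws vs' where "j = length P" and "ws = P @ \<alpha> # Q" and "vs' = map f (remove_nth j vs)"
  have w: "walk src tgt ws vs" and lv: "length vs = Suc (Suc (j + length Q))" and sE: "set ws \<subseteq> E"
    using cw by (auto simp: closed_walk_def walk_def j_def ws_def)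
  have fj: "f (vs ! j) = f (vs ! Suc j)"
    using walk_glue[OF w _ _ glue] by (simp add: j_def ws_def)
  have vs': "vs' ! i = f (vs ! (if i < j then i else Suc i))" if "i \<le> j + length Q" for i
    using that lv by (simp add: vs'_def nth_map_remove_nth)
  have es: "edge_sign src tgt (ws ! m) (vs ! m) (vs ! Suc m) =
      edge_sign (f \<circ> src) (f \<circ> tgt) (ws ! m) (f (vs ! m)) (f (vs ! Suc m))"
    if "m < Suc (j + length Q)" "m \<noteq> j" for m
  proof -
    have "ws ! m \<in> set P \<union> set Q"
      using that by (auto simp: ws_def j_def nth_append nth_Cons' nth_mem split: if_splits)
    then have "ws ! m \<in> E - {\<alpha>}" using sE \<alpha> by (auto simp: ws_def)
    then show ?thesis
      using that w sep by (intro edge_sign_map[symmetric]) (auto simp: walk_def ws_def j_def)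
  qed
  have "cofactor r \<alpha> (omit_sum r (walk_coeff r src tgt ws vs) (P @ \<alpha> # Q)) =
      lscale (ksign r (length Q)) (omit_sum r (walk_coeff r (f \<circ> src) (f \<circ> tgt) (P @ Q) vs') (P @ Q))"
  proof (rule cofactor_omit_sum_single[OF \<alpha>])
    fix i assume i: "i < length P"
    have "vs' ! Suc i = f (vs ! Suc i)" using vs'[of "Suc i"] fj i by (cases "Suc i = j") (auto simp: j_def)
    then have "walk_coeff r src tgt ws vs i = ksign r (i - i) * walk_coeff r (f \<circ> src) (f \<circ> tgt) (P @ Q) vs' i"
      using i es[of i] vs'[of i] by (intro walk_coeff_shift r) (auto simp: ws_def j_def nth_append)
    then show "walk_coeff r (f \<circ> src) (f \<circ> tgt) (P @ Q) vs' i = walk_coeff r src tgt ws vs i" by simp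
  next
    fix i assume i: "i < length Q"
    have "walk_coeff r src tgt ws vs (Suc (i + j)) =
        ksign r (Suc (i + j) - (i + j)) * walk_coeff r (f \<circ> src) (f \<circ> tgt) (P @ Q) vs' (i + j)"
      using i es[of "Suc (i + j)"] vs'[of "i + j"] vs'[of "Suc (i + j)"]
      by (intro walk_coeff_shift r) (auto simp: ws_def j_def nth_append)
    then show "walk_coeff r src tgt ws vs (Suc (i + length P)) =
        ksign r 1 * walk_coeff r (f \<circ> src) (f \<circ> tgt) (P @ Q) vs' (i + length P)"
      by (simp add: j_def)
  qed
  then show ?thesis by (simp add: arnold_walk_def ws_def vs'_def j_def)
qed

lemma arnold_walk_back_and_forth:
  assumes "{src a, tgt a} = {u, v}" "u \<noteq> v"
  shows "arnold_walk r src tgt [a, a] [u, v, u] = lzero"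
proof -
  have "walk_coeff r src tgt [a, a] [u, v, u] 0 + walk_coeff r src tgt [a, a] [u, v, u] 1 = 0"
    using assms by (auto simp: walk_coeff_def edge_sign_def doubleton_eq_iff)
  then show ?thesis
    unfolding arnold_walk_def omit_sum_def
    by (intro ext) (simp add: lzero_def numeral_2_eq_2 remove_nth_def distrib_right[symmetric])
qed

lemma simple_closed_walk_repeated_edge:
  assumes cw: "closed_walk E src tgt ws vs" and ds: "distinct (take (length ws) vs)"
    and loopless: "\<forall>e\<in>E. src e \<noteq> tgt e" and pq: "p < q" "q < length ws" "ws ! p = ws ! q"
  obtains a u v where "ws = [a, a]" "vs = [u, v, u]" "u \<noteq> v" "{src a, tgt a} = {u, v}"
proof -
  define k a where "k = length ws" and "a = ws ! p"
  have lv: "length vs = Suc k" and ch: "\<forall>i<k. {src (ws ! i), tgt (ws ! i)} = {vs ! i, vs ! Suc i}"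
    and sE: "set ws \<subseteq> E" and cl: "vs ! 0 = vs ! k"
    using cw by (auto simp: closed_walk_def walk_def k_def)
  have dist: "i = i'" if "i < k" "i' < k" "vs ! i = vs ! i'" for i i'
    using ds that lv by (simp add: k_def nth_eq_iff_index_eq[symmetric])
  have "a \<in> E" using pq sE by (auto simp: a_def)
  then have "src a \<noteq> tgt a" using loopless by blast
  moreover have e: "{src a, tgt a} = {vs ! p, vs ! Suc p}" "{src a, tgt a} = {vs ! q, vs ! Suc q}"
    using ch[rule_format, of p] ch[rule_format, of q] pq by (simp_all add: a_def k_def)
  moreover have "vs ! q \<noteq> vs ! p" using dist[of q p] pq k_def by auto
  ultimately have vq: "vs ! q = vs ! Suc p" "vs ! Suc q = vs ! p"
    by (auto simp: doubleton_eq_iff)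
  have q_p: "q = Suc p" using dist[of q "Suc p"] vq pq k_def by simp
  have "\<not> Suc q < k" using dist[of "Suc q" p] vq pq q_p by auto
  then have k_q: "k = Suc q" using pq k_def by simp
  then have "p = 0" using dist[of p 0] vq cl pq by simp
  with k_q q_p have "k = 2" "p = 0" "q = 1" by simp_all
  moreover obtain x y where "ws = [x, y]"
    using \<open>k = 2\<close> by (metis k_def length_0_conv length_Suc_conv numeral_2_eq_2)
  moreover obtain u v w where "vs = [u, v, w]"
    using lv \<open>k = 2\<close> by (metis length_0_conv length_Suc_conv numeral_2_eq_2)
  ultimately show thesis
    using that[of a u v] e pq cl dist[of 0 1] by (auto simp: a_def k_def)
qed

lemma ideal_closed_free_part_cofactor_preimage:
  fixes r :: nat and E :: "('e::linorder) set" and \<alpha> :: 'e and src' tgt' :: "'e \<Rightarrow> 'v"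
  defines "I' \<equiv> arnold_ideal r (E - {\<alpha>}) src' tgt'"
  shows "ideal_closed r E {x. free_part \<alpha> x \<in> I' \<and> cofactor r \<alpha> x \<in> I'}"
proof (rule ideal_closedI)
  fix x y assume "x \<in> {x. free_part \<alpha> x \<in> I' \<and> cofactor r \<alpha> x \<in> I'}" and y: "in_lam E y"
  then have x: "free_part \<alpha> x \<in> I'" "cofactor r \<alpha> x \<in> I'" by simp_all
  have y': "in_lam (E - {\<alpha>}) (free_part \<alpha> y)" "in_lam (E - {\<alpha>}) (cofactor r \<alpha> y)"
    using y by (simp_all add: in_lam_free_part in_lam_cofactor)
  show "lmult r y x \<in> {x. free_part \<alpha> x \<in> I' \<and> cofactor r \<alpha> x \<in> I'}"
    "lmult r x y \<in> {x. free_part \<alpha> x \<in> I' \<and> cofactor r \<alpha> x \<in> I'}"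
    using x y' unfolding I'_def
    by (simp_all add: free_part_lmult cofactor_lmult arnold_ideal.intros arnold_ideal_gradinv)
qed (auto simp: I'_def free_part_ladd cofactor_ladd free_part_lscale cofactor_lscale arnold_ideal.intros
      arnold_ideal_lscale)

lemma free_part_cofactor_simple_arnold_walk:
  assumes cw: "closed_walk E src tgt ws vs" and ds: "distinct (take (length ws) vs)"
    and loopless: "\<forall>e\<in>E. src e \<noteq> tgt e" and glue: "f (src \<alpha>) = f (tgt \<alpha>)"
    and sep: "\<forall>e\<in>E - {\<alpha>}. f (src e) \<noteq> f (tgt e)" and r: "r \<ge> 1"
  defines "I' \<equiv> arnold_ideal r (E - {\<alpha>}) (f \<circ> src) (f \<circ> tgt)"
  shows "free_part \<alpha> (arnold_walk r src tgt ws vs) \<in> I' \<and> cofactor r \<alpha> (arnold_walk r src tgt ws vs) \<in> I'"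
proof (cases "\<alpha> \<in> set ws")
  case False
  have "\<forall>e\<in>E - {\<alpha>}. (f \<circ> src) e \<noteq> (f \<circ> tgt) e" using sep by simp
  then show ?thesis
    using arnold_walk_in_ideal[OF closed_walk_map(1)[OF cw False sep r], of r] closed_walk_map(2)[OF cw False sep r]
      False
    by (simp add: I'_def arnold_walk_def free_part_omit_sum cofactor_omit_sum arnold_ideal.zero)
next
  case True
  then obtain P Q where ws: "ws = P @ \<alpha> # Q" and "\<alpha> \<notin> set P"
    using split_list_first by metis
  show ?thesis
  proof (cases "\<alpha> \<in> set Q")
    case True
    then obtain m where "m < length Q" "Q ! m = \<alpha>" by (metis in_set_conv_nth)
    then have "ws ! length P = ws ! Suc (length P + m)" "Suc (length P + m) < length ws"
      by (simp_all add: ws nth_append)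
    then obtain a u v where "ws = [a, a]" "vs = [u, v, u]" "u \<noteq> v" "{src a, tgt a} = {u, v}"
      using simple_closed_walk_repeated_edge[OF cw ds loopless, of "length P" "Suc (length P + m)"] by auto
    then show ?thesis by (simp add: arnold_walk_back_and_forth arnold_ideal.zero I'_def)
  next
    case False
    have "src \<alpha> \<noteq> tgt \<alpha>" using cw loopless by (auto simp: closed_walk_def ws)
    note cw' = closed_walk_contract_single[OF cw[unfolded ws] this glue \<open>\<alpha> \<notin> set P\<close> False]
    have "free_part \<alpha> (arnold_walk r src tgt ws vs) = lscale (walk_coeff r src tgt ws vs (length P)) (listprod r (P @ Q))"
      by (simp add: arnold_walk_def ws free_part_omit_sum_single \<open>\<alpha> \<notin> set P\<close> False)
    moreover have "cofactor r \<alpha> (arnold_walk r src tgt ws vs) =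
        lscale (ksign r (length Q)) (arnold_walk r (f \<circ> src) (f \<circ> tgt) (P @ Q) (map f (remove_nth (length P) vs)))"
      unfolding ws by (rule cofactor_arnold_walk_single[OF cw[unfolded ws] glue \<open>\<alpha> \<notin> set P\<close> False sep r])
    moreover have "\<forall>e\<in>E - {\<alpha>}. (f \<circ> src) e \<noteq> (f \<circ> tgt) e" using sep by simp
    ultimately show ?thesis
      unfolding I'_def using listprod_in_arnold_ideal[OF cw'] arnold_walk_in_ideal[OF cw']
      by (simp add: arnold_ideal_lscale)
  qed
qed

lemma free_part_cofactor_in_contraction_ideal:
  assumes "finite E" and loopless: "\<forall>e\<in>E. src e \<noteq> tgt e" and glue: "f (src \<alpha>) = f (tgt \<alpha>)"
    and r: "r \<ge> 1" and x: "x \<in> arnold_ideal r E src tgt"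
  defines "I' \<equiv> arnold_ideal r (E - {\<alpha>}) (f \<circ> src) (f \<circ> tgt)"
  shows "free_part \<alpha> x \<in> I' \<and> cofactor r \<alpha> x \<in> I'"
proof (cases "\<exists>\<beta>\<in>E - {\<alpha>}. f (src \<beta>) = f (tgt \<beta>)")
  case True
  then obtain \<beta> where "\<beta> \<in> E - {\<alpha>}" "(f \<circ> src) \<beta> = (f \<circ> tgt) \<beta>" by auto
  moreover have "in_lam (E - {\<alpha>}) (free_part \<alpha> x)" "in_lam (E - {\<alpha>}) (cofactor r \<alpha> x)"
    using arnold_ideal_in_lam[OF x] by (simp_all add: in_lam_free_part in_lam_cofactor)
  ultimately show ?thesis
    unfolding I'_def using \<open>finite E\<close> by (blast intro: arnold_ideal_loop)
next
  case False
  then have sep: "\<forall>e\<in>E - {\<alpha>}. f (src e) \<noteq> f (tgt e)" by blast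
  have "arnold_ideal r E src tgt \<subseteq> {x. free_part \<alpha> x \<in> I' \<and> cofactor r \<alpha> x \<in> I'}"
    unfolding I'_def
    by (intro arnold_ideal_subset r loopless ideal_closed_free_part_cofactor_preimage CollectI
        free_part_cofactor_simple_arnold_walk[OF _ _ loopless glue sep r])
  with x show ?thesis by blast
qed

section \<open>Lifting closed walks of the contraction\<close>

lemma contr_vert_eq:
  "contr_vert src tgt \<alpha> x = contr_vert src tgt \<alpha> y \<Longrightarrow> x \<noteq> y \<Longrightarrow>
    {x, y} = {src \<alpha>, tgt \<alpha>} \<and> contr_vert src tgt \<alpha> x = src \<alpha>"
  by (auto simp: contr_vert_def split: if_splits)

lemma contr_vert_glue: "contr_vert src tgt \<alpha> (src \<alpha>) = contr_vert src tgt \<alpha> (tgt \<alpha>)"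
  by (simp add: contr_vert_def)

definition lift_vertex :: "('e \<Rightarrow> 'v) \<Rightarrow> ('e \<Rightarrow> 'v) \<Rightarrow> ('v \<Rightarrow> 'w) \<Rightarrow> 'e \<Rightarrow> 'w \<Rightarrow> 'v" where
  "lift_vertex src tgt f e u = (if f (src e) = u then src e else tgt e)"

lemma lift_vertex_edge:
  assumes "f (src e) \<noteq> f (tgt e)" "{f (src e), f (tgt e)} = {u, v}"
  shows "{lift_vertex src tgt f e u, lift_vertex src tgt f e v} = {src e, tgt e}"
    and "f (lift_vertex src tgt f e u) = u" "f (lift_vertex src tgt f e v) = v"
  using assms by (auto simp: lift_vertex_def doubleton_eq_iff)

lemma nth_insert_at:
  "m \<le> length xs \<Longrightarrow> i \<le> length xs \<Longrightarrow>
    (take m xs @ a # drop m xs) ! i = (if i < m then xs ! i else if i = m then a else xs ! (i - 1))"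
  by (auto simp: nth_append min_def nth_Cons' not_less)

locale contracted_simple_walk =
  fixes E :: "'e set" and src tgt :: "'e \<Rightarrow> 'v" and \<alpha> :: 'e and ws :: "'e list" and vs :: "'v list"
  assumes cw: "closed_walk (E - {\<alpha>}) (contr_vert src tgt \<alpha> \<circ> src) (contr_vert src tgt \<alpha> \<circ> tgt) ws vs"
    and simple: "distinct (take (length ws) vs)"
    and sep: "\<forall>e\<in>E - {\<alpha>}. contr_vert src tgt \<alpha> (src e) \<noteq> contr_vert src tgt \<alpha> (tgt e)"
begin

abbreviation "cv \<equiv> contr_vert src tgt \<alpha>"
abbreviation "k \<equiv> length ws"

(* The i-th edge runs in Gamma from start i to finish i, above the vertices i and i + 1 of the walk
   in Gamma/alpha. Consecutive lifted edges meet unless there is a mismatch at the vertex between them,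
   which can only happen at the merged vertex src alpha, hence at most once. *)
definition start :: "nat \<Rightarrow> 'v" where "start i = lift_vertex src tgt cv (ws ! i) (vs ! i)"
definition finish :: "nat \<Rightarrow> 'v" where "finish i = lift_vertex src tgt cv (ws ! i) (vs ! Suc i)"
definition lifted :: "'v list" where "lifted = map start [0..<k] @ [start 0]"
definition mismatch :: "nat \<Rightarrow> bool" where "mismatch m \<longleftrightarrow> finish (m - 1) \<noteq> lifted ! m"

lemma length_vs: "length vs = Suc k"
  using cw by (simp add: closed_walk_def walk_def)

lemma k_pos: "0 < k"
  using cw by (simp add: closed_walk_def)

lemma edge_in: "i < k \<Longrightarrow> ws ! i \<in> E - {\<alpha>}"
  using cw nth_mem by (fastforce simp: closed_walk_def)

lemma set_ws: "set ws \<subseteq> E - {\<alpha>}"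
  using cw by (simp add: closed_walk_def)

lemma lifted_edge:
  assumes "i < k"
  shows "{start i, finish i} = {src (ws ! i), tgt (ws ! i)}" "cv (start i) = vs ! i" "cv (finish i) = vs ! Suc i"
proof -
  have "cv (src (ws ! i)) \<noteq> cv (tgt (ws ! i))" using sep edge_in[OF assms] by blast
  moreover have "{cv (src (ws ! i)), cv (tgt (ws ! i))} = {vs ! i, vs ! Suc i}"
    using cw assms by (simp add: closed_walk_def walk_def)
  ultimately show "{start i, finish i} = {src (ws ! i), tgt (ws ! i)}" "cv (start i) = vs ! i"
    "cv (finish i) = vs ! Suc i"
    unfolding start_def finish_def by (simp_all add: lift_vertex_edge)
qed

lemma length_lifted: "length lifted = Suc k"
  by (simp add: lifted_def)

lemma nth_lifted: "i \<le> k \<Longrightarrow> lifted ! i = (if i < k then start i else start 0)"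
  by (simp add: lifted_def nth_append)

lemma map_cv_lifted: "map cv lifted = vs"
proof (rule nth_equalityI)
  fix i assume "i < length (map cv lifted)"
  then have "i \<le> k" by (simp add: length_lifted)
  then show "map cv lifted ! i = vs ! i"
    using lifted_edge(2) k_pos cw by (cases "i < k") (simp_all add: nth_lifted closed_walk_def length_lifted)
qed (simp add: length_lifted length_vs)

lemma lifted_step:
  assumes "1 \<le> n" "n \<le> k" "\<not> mismatch n"
  shows "{src (ws ! (n - 1)), tgt (ws ! (n - 1))} = {lifted ! (n - 1), lifted ! n}"
proof -
  have "n - 1 < k" using assms by simp
  then show ?thesis
    using assms lifted_edge(1)[of "n - 1"] nth_lifted[of "n - 1"] by (simp add: mismatch_def)
qed

lemma mismatch_ends:
  assumes "1 \<le> m" "m \<le> k" "mismatch m"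
  shows "vs ! m = src \<alpha>" "{finish (m - 1), lifted ! m} = {src \<alpha>, tgt \<alpha>}"
proof -
  have "cv (finish (m - 1)) = vs ! m" using assms lifted_edge(3)[of "m - 1"] by simp
  moreover have "cv (lifted ! m) = vs ! m"
    using assms nth_map[of m lifted cv] by (simp add: map_cv_lifted length_lifted)
  moreover have "finish (m - 1) \<noteq> lifted ! m" using assms(3) by (simp add: mismatch_def)
  ultimately have "{finish (m - 1), lifted ! m} = {src \<alpha>, tgt \<alpha>} \<and> cv (finish (m - 1)) = src \<alpha>"
    by (intro contr_vert_eq) simp_all
  with \<open>cv (finish (m - 1)) = vs ! m\<close>
  show "vs ! m = src \<alpha>" "{finish (m - 1), lifted ! m} = {src \<alpha>, tgt \<alpha>}" by simp_all
qed

lemma vertex_eq: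
  assumes "i < k" "j < k" "vs ! i = vs ! j"
  shows "i = j"
  using simple assms length_vs nth_eq_iff_index_eq[OF simple, of i j] by simp

lemma mismatch_unique:
  assumes "1 \<le> m" "m \<le> k" "mismatch m" "1 \<le> m'" "m' \<le> k" "mismatch m'"
  shows "m = m'"
proof -
  define wrap where "wrap n = (if n = k then 0 else n)" for n
  have wrap: "vs ! wrap n = vs ! n" "wrap n < k" if "n \<le> k" for n
    using that cw k_pos by (auto simp: wrap_def closed_walk_def)
  have "vs ! m = vs ! m'" using mismatch_ends(1) assms by simp
  then have "wrap m = wrap m'"
    using wrap[of m] wrap[of m'] assms by (intro vertex_eq) simp_all
  then show ?thesis using assms by (auto simp: wrap_def split: if_splits)
qed

lemma closed_walk_lifted:
  assumes "\<forall>m. 1 \<le> m \<and> m \<le> k \<longrightarrow> \<not> mismatch m"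
  shows "closed_walk E src tgt ws lifted"
  unfolding closed_walk_def walk_def
proof (intro conjI allI impI)
  fix i assume "i < k"
  then show "{src (ws ! i), tgt (ws ! i)} = {lifted ! i, lifted ! Suc i}"
    using lifted_step[of "Suc i"] assms by simp
qed (use set_ws k_pos in \<open>auto simp: length_lifted nth_lifted\<close>)

lemma closed_walk_lifted_insert:
  assumes "\<alpha> \<in> E" "1 \<le> m" "m \<le> k" "mismatch m"
  shows "closed_walk E src tgt (take m ws @ \<alpha> # drop m ws) (take m lifted @ finish (m - 1) # drop m lifted)"
  unfolding closed_walk_def walk_def
proof (intro conjI allI impI)
  have other: "\<not> mismatch n" if "1 \<le> n" "n \<le> k" "n \<noteq> m" for n
    using mismatch_unique[OF assms(2-4)] that by blast
  have ws': "(take m ws @ \<alpha> # drop m ws) ! i = (if i < m then ws ! i else if i = m then \<alpha> else ws ! (i - 1))"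
    if "i \<le> k" for i
    using that assms(3) by (simp add: nth_insert_at)
  have L': "(take m lifted @ finish (m - 1) # drop m lifted) ! i =
      (if i < m then lifted ! i else if i = m then finish (m - 1) else lifted ! (i - 1))"
    if "i \<le> Suc k" for i
    using that assms(3) by (simp add: nth_insert_at length_lifted)
  fix i assume "i < length (take m ws @ \<alpha> # drop m ws)"
  then have i: "i \<le> k" using assms(3) by simp
  note m = assms(2,3)
  consider "Suc i < m" | "Suc i = m" | "i = m" | "m < i" by linarith
  then show "{src ((take m ws @ \<alpha> # drop m ws) ! i), tgt ((take m ws @ \<alpha> # drop m ws) ! i)} =
      {(take m lifted @ finish (m - 1) # drop m lifted) ! i, (take m lifted @ finish (m - 1) # drop m lifted) ! Suc i}"
  proof cases
    case 1 then show ?thesis using i m ws' L' L'[of "Suc i"] lifted_step[of "Suc i"] other[of "Suc i"] by simp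
  next
    case 2
    then have "m - 1 = i" by simp
    with 2 show ?thesis using i m ws' L' L'[of "Suc i"] lifted_edge(1)[of i] nth_lifted[of i] by simp
  next
    case 3 then show ?thesis
      using i ws' L' L'[of "Suc i"] mismatch_ends(2)[OF assms(2-4)] assms(3) by (simp add: insert_commute)
  next
    case 4 then show ?thesis using i m ws' L' L'[of "Suc i"] lifted_step[of i] other[of i] by simp
  qed
qed (use set_ws assms k_pos in \<open>auto simp: length_lifted nth_lifted nth_append dest: in_set_takeD in_set_dropD\<close>)

lemma remove_nth_insert_lifted:
  "m \<le> k \<Longrightarrow> map cv (remove_nth m (take m lifted @ x # drop m lifted)) = vs"
  by (simp add: remove_nth_def length_lifted map_cv_lifted flip: map_append)

end

lemma arnold_walk_lift:
  assumes "contracted_simple_walk E src tgt \<alpha> ws vs" and "\<alpha> \<in> E"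
    and loopless: "\<forall>e\<in>E. src e \<noteq> tgt e" and r: "r \<ge> 1"
  defines "cv \<equiv> contr_vert src tgt \<alpha>"
  shows "\<exists>i\<in>arnold_ideal r E src tgt. arnold_walk r (cv \<circ> src) (cv \<circ> tgt) ws vs = cofactor r \<alpha> i"
proof -
  interpret contracted_simple_walk E src tgt \<alpha> ws vs by fact
  have \<alpha>: "\<alpha> \<notin> set ws" using set_ws by blast
  show ?thesis
  proof (cases "\<exists>m. 1 \<le> m \<and> m \<le> k \<and> mismatch m")
    case False
    then have cw': "closed_walk E src tgt ws lifted" by (intro closed_walk_lifted) blast
    define i where "i = lmult r (arnold_walk r src tgt ws lifted) (gen \<alpha>)"
    have "i \<in> arnold_ideal r E src tgt"
      unfolding i_def by (intro arnold_ideal.rmul arnold_walk_in_ideal cw' loopless in_lam_gen assms(2))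
    moreover have "cofactor r \<alpha> i = arnold_walk r (cv \<circ> src) (cv \<circ> tgt) ws vs"
      using closed_walk_map(2)[OF cw' \<alpha> sep r]
      by (simp add: i_def cofactor_lmult_gen arnold_walk_def free_part_omit_sum \<alpha> map_cv_lifted cv_def)
    ultimately show ?thesis by metis
  next
    case True
    then obtain m where m: "1 \<le> m" "m \<le> k" "mismatch m" by blast
    let ?L = "take m lifted @ finish (m - 1) # drop m lifted"
    have cw': "closed_walk E src tgt (take m ws @ \<alpha> # drop m ws) ?L"
      by (rule closed_walk_lifted_insert[OF assms(2) m])
    have "\<alpha> \<notin> set (take m ws)" "\<alpha> \<notin> set (drop m ws)" using \<alpha> by (auto dest: in_set_takeD in_set_dropD)
    from cofactor_arnold_walk_single[OF cw' contr_vert_glue this sep r]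
    have "cofactor r \<alpha> (arnold_walk r src tgt (take m ws @ \<alpha> # drop m ws) ?L) =
        lscale (ksign r (length (drop m ws))) (arnold_walk r (cv \<circ> src) (cv \<circ> tgt) ws vs)"
      using m by (simp add: remove_nth_insert_lifted min_absorb2 cv_def)
    then have "cofactor r \<alpha> (lscale (ksign r (length (drop m ws))) (arnold_walk r src tgt (take m ws @ \<alpha> # drop m ws) ?L))
        = arnold_walk r (cv \<circ> src) (cv \<circ> tgt) ws vs"
      by (simp add: cofactor_lscale)
    moreover have "lscale (ksign r (length (drop m ws))) (arnold_walk r src tgt (take m ws @ \<alpha> # drop m ws) ?L)
        \<in> arnold_ideal r E src tgt"
      by (intro arnold_ideal_lscale arnold_walk_in_ideal cw' loopless)
    ultimately show ?thesis by metis
  qed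
qed

lemma ideal_closed_cofactor_image:
  "ideal_closed r (E - {\<alpha>}) (cofactor r \<alpha> ` arnold_ideal r E src tgt)"
proof (rule ideal_closedI)
  fix k z assume "k \<in> cofactor r \<alpha> ` arnold_ideal r E src tgt" and z: "in_lam (E - {\<alpha>}) z"
  then obtain i where i: "i \<in> arnold_ideal r E src tgt" "k = cofactor r \<alpha> i" by blast
  have "in_lam E z" using z in_lam_mono by blast
  moreover from this have "in_lam E (gradinv r z)" by simp
  ultimately have "lmult r z i \<in> arnold_ideal r E src tgt" "lmult r i (gradinv r z) \<in> arnold_ideal r E src tgt"
    using i by (simp_all add: arnold_ideal.intros)
  moreover have "cofactor r \<alpha> (lmult r z i) = lmult r z k" "cofactor r \<alpha> (lmult r i (gradinv r z)) = lmult r k z"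
    using i by (simp_all add: cofactor_lmult_free_left[OF z] cofactor_lmult_free_right[OF in_lam_gradinv[OF z]])
  ultimately show "lmult r z k \<in> cofactor r \<alpha> ` arnold_ideal r E src tgt"
    "lmult r k z \<in> cofactor r \<alpha> ` arnold_ideal r E src tgt"
    by (metis image_eqI)+
next
  show "lzero \<in> cofactor r \<alpha> ` arnold_ideal r E src tgt"
    using arnold_ideal.zero by (metis cofactor_simps(1) image_eqI)
qed (auto simp flip: cofactor_ladd cofactor_lscale intro: arnold_ideal.add arnold_ideal_lscale)

lemma lone_in_cofactor_image:
  assumes "\<alpha> \<in> E" "\<beta> \<in> E - {\<alpha>}" "{src \<beta>, tgt \<beta>} = {src \<alpha>, tgt \<alpha>}" "\<forall>e\<in>E. src e \<noteq> tgt e"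
  shows "lone \<in> cofactor r \<alpha> ` arnold_ideal r E src tgt"
proof -
  define vs where "vs = [src \<alpha>, tgt \<alpha>, src \<alpha>]"
  define c where "c = walk_coeff r src tgt [\<alpha>, \<beta>] vs 1"
  have cw: "closed_walk E src tgt [\<alpha>, \<beta>] vs"
    using assms unfolding closed_walk_def walk_def vs_def by (auto simp: less_Suc_eq numeral_2_eq_2 insert_commute)
  have "arnold_walk r src tgt [\<alpha>, \<beta>] vs = ladd (lscale (walk_coeff r src tgt [\<alpha>, \<beta>] vs 0) (gen \<beta>)) (lscale c (gen \<alpha>))"
    unfolding arnold_walk_def c_def
    by (rule ext) (simp add: omit_sum_def ladd_def lscale_def numeral_2_eq_2 remove_nth_def lmult_lone_right)
  then have "cofactor r \<alpha> (lscale c (arnold_walk r src tgt [\<alpha>, \<beta>] vs)) = lone"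
    using assms(2) by (simp add: cofactor_lscale cofactor_ladd cofactor_gen c_def)
  moreover have "lscale c (arnold_walk r src tgt [\<alpha>, \<beta>] vs) \<in> arnold_ideal r E src tgt"
    by (intro arnold_ideal_lscale arnold_walk_in_ideal cw assms(4))
  ultimately show ?thesis by (metis image_eqI)
qed

lemma contraction_ideal_in_cofactor_image:
  assumes "finite E" and loopless: "\<forall>e\<in>E. src e \<noteq> tgt e" and "\<alpha> \<in> E" and r: "r \<ge> 1"
  defines "cv \<equiv> contr_vert src tgt \<alpha>"
  assumes y: "y \<in> arnold_ideal r (E - {\<alpha>}) (cv \<circ> src) (cv \<circ> tgt)"
  shows "y \<in> cofactor r \<alpha> ` arnold_ideal r E src tgt"
proof (cases "\<exists>\<beta>\<in>E - {\<alpha>}. cv (src \<beta>) = cv (tgt \<beta>)")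
  case True
  then obtain \<beta> where \<beta>: "\<beta> \<in> E - {\<alpha>}" "cv (src \<beta>) = cv (tgt \<beta>)" by blast
  then have "{src \<beta>, tgt \<beta>} = {src \<alpha>, tgt \<alpha>}"
    using contr_vert_eq[of src tgt \<alpha> "src \<beta>" "tgt \<beta>"] loopless by (auto simp: cv_def)
  with \<beta> have "lone \<in> cofactor r \<alpha> ` arnold_ideal r E src tgt"
    using assms(3) loopless by (intro lone_in_cofactor_image)
  moreover have "in_lam (E - {\<alpha>}) y" by (rule arnold_ideal_in_lam[OF y])
  ultimately have "lmult r y lone \<in> cofactor r \<alpha> ` arnold_ideal r E src tgt"
    using ideal_closed_cofactor_image[of r E \<alpha> src tgt] unfolding ideal_closed_def by blast
  then show ?thesis
    using in_lam_finite_supp[OF _ \<open>in_lam (E - {\<alpha>}) y\<close>] \<open>finite E\<close> by (simp add: lmult_lone_right)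
next
  case False
  then have sep: "\<forall>e\<in>E - {\<alpha>}. (cv \<circ> src) e \<noteq> (cv \<circ> tgt) e" by simp
  have "arnold_ideal r (E - {\<alpha>}) (cv \<circ> src) (cv \<circ> tgt) \<subseteq> cofactor r \<alpha> ` arnold_ideal r E src tgt"
  proof (rule arnold_ideal_subset[OF r sep ideal_closed_cofactor_image])
    fix ws vs assume "closed_walk (E - {\<alpha>}) (cv \<circ> src) (cv \<circ> tgt) ws vs" "distinct (take (length ws) vs)"
    then have "contracted_simple_walk E src tgt \<alpha> ws vs"
      using False by unfold_locales (auto simp: cv_def)
    then show "arnold_walk r (cv \<circ> src) (cv \<circ> tgt) ws vs \<in> cofactor r \<alpha> ` arnold_ideal r E src tgt"
      using arnold_walk_lift[OF _ assms(3) loopless r] by (fastforce simp: cv_def)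
  qed
  with y show ?thesis by blast
qed

section \<open>Exactness\<close>

lemma cofactor_surj:
  assumes "finite E" "\<alpha> \<in> E" "in_lam (E - {\<alpha>}) y"
  shows "in_lam E (lmult r y (gen \<alpha>)) \<and> cofactor r \<alpha> (lmult r y (gen \<alpha>)) = y"
  using assms in_lam_mono[OF assms(3)] in_lam_finite_supp[OF _ assms(3)]
  by (simp add: in_lam_gen cofactor_lmult_gen free_part_id[OF assms(3)])

lemma cofactor_in_contraction_ideal_iff:
  assumes "finite E" and loopless: "\<forall>e\<in>E. src e \<noteq> tgt e" and "\<alpha> \<in> E" "r \<ge> 1" and x: "in_lam E x"
  defines "cv \<equiv> contr_vert src tgt \<alpha>"
  shows "cofactor r \<alpha> x \<in> arnold_ideal r (E - {\<alpha>}) (cv \<circ> src) (cv \<circ> tgt) \<longleftrightarrow>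
    (\<exists>z. in_lam (E - {\<alpha>}) z \<and> lsub x z \<in> arnold_ideal r E src tgt)"
proof
  assume "cofactor r \<alpha> x \<in> arnold_ideal r (E - {\<alpha>}) (cv \<circ> src) (cv \<circ> tgt)"
  then obtain i where i: "i \<in> arnold_ideal r E src tgt" "cofactor r \<alpha> x = cofactor r \<alpha> i"
    using contraction_ideal_in_cofactor_image[OF assms(1-4)] unfolding cv_def by blast
  define z where "z = lsub (free_part \<alpha> x) (free_part \<alpha> i)"
  have z: "in_lam (E - {\<alpha>}) z"
    using x arnold_ideal_in_lam[OF i(1)] by (simp add: z_def in_lam_free_part)
  have "free_part \<alpha> (lsub x z) = free_part \<alpha> i"
    by (rule ext) (simp add: z_def free_part_def lsub_def)
  moreover have "cofactor r \<alpha> (lsub x z) = cofactor r \<alpha> i"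
    unfolding cofactor_lsub cofactor_eq_lzero[OF z] i(2) by (rule ext) (simp add: lsub_def lzero_def)
  ultimately have "lsub x z = i" by (rule lam_eqI_free_part_cofactor)
  with z i(1) show "\<exists>z. in_lam (E - {\<alpha>}) z \<and> lsub x z \<in> arnold_ideal r E src tgt" by blast
next
  assume "\<exists>z. in_lam (E - {\<alpha>}) z \<and> lsub x z \<in> arnold_ideal r E src tgt"
  then obtain z where z: "in_lam (E - {\<alpha>}) z" "lsub x z \<in> arnold_ideal r E src tgt" by blast
  have "cofactor r \<alpha> (lsub x z) = cofactor r \<alpha> x"
    unfolding cofactor_lsub cofactor_eq_lzero[OF z(1)] by (rule ext) (simp add: lsub_def lzero_def)
  then show "cofactor r \<alpha> x \<in> arnold_ideal r (E - {\<alpha>}) (cv \<circ> src) (cv \<circ> tgt)"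
    using free_part_cofactor_in_contraction_ideal[OF assms(1) loopless contr_vert_glue[of src tgt \<alpha>] assms(4) z(2)]
    by (simp add: cv_def)
qed

theorem mainTheorem5:
  fixes r :: nat and E :: "('e::linorder) set" and src tgt :: "'e \<Rightarrow> 'v" and \<alpha> :: 'e
  assumes "r \<ge> 1" and "finite E" and "\<forall>e\<in>E. src e \<noteq> tgt e" and "\<alpha> \<in> E"
  shows
    \<comment> \<open>g^R is surjective\<close>
    "(\<forall>y. in_lam (E - {\<alpha>}) y \<longrightarrow>
        (\<exists>x. in_lam E x \<and>
           lsub (g_map r E \<alpha> x) y \<in> arnold_ideal r (E - {\<alpha>})
              (contr_vert src tgt \<alpha> \<circ> src) (contr_vert src tgt \<alpha> \<circ> tgt)))
     \<and>
     \<comment> \<open>ker g^R = im i^R\<close>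
     (\<forall>x. in_lam E x \<longrightarrow>
        (g_map r E \<alpha> x \<in> arnold_ideal r (E - {\<alpha>})
              (contr_vert src tgt \<alpha> \<circ> src) (contr_vert src tgt \<alpha> \<circ> tgt)
         \<longleftrightarrow> (\<exists>z. in_lam (E - {\<alpha>}) z \<and> lsub x z \<in> arnold_ideal r E src tgt)))"
proof (intro conjI allI impI)
  fix y :: "'e lam" assume "in_lam (E - {\<alpha>}) y"
  then have "in_lam E (lmult r y (gen \<alpha>)) \<and> g_map r E \<alpha> (lmult r y (gen \<alpha>)) = y"
    using cofactor_surj[OF assms(2,4)] g_map_eq_cofactor[OF assms(2)] by simp
  then show "\<exists>x. in_lam E x \<and>
      lsub (g_map r E \<alpha> x) y \<in> arnold_ideal r (E - {\<alpha>}) (contr_vert src tgt \<alpha> \<circ> src) (contr_vert src tgt \<alpha> \<circ> tgt)"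
    using arnold_ideal.zero by (metis lsub_self)
next
  fix x :: "'e lam" assume "in_lam E x"
  then show "g_map r E \<alpha> x \<in> arnold_ideal r (E - {\<alpha>}) (contr_vert src tgt \<alpha> \<circ> src) (contr_vert src tgt \<alpha> \<circ> tgt)
      \<longleftrightarrow> (\<exists>z. in_lam (E - {\<alpha>}) z \<and> lsub x z \<in> arnold_ideal r E src tgt)"
    using cofactor_in_contraction_ideal_iff[OF assms(2,3,4,1)] g_map_eq_cofactor[OF assms(2)] by simp
qed

end
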